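(* Let $T$ be an anonymous, non-counterfactual, reasonable tail test. If $T\not\sim\mathcal{D}$, then for every $0<\epsilon<1$ there exists a pair $\hat f=(\hat f_0,\hat f_1)\in F\times F$ such that $$P_0^{\hat f}(\{T(\cdot,\hat f)=1\})>1-\epsilon\quad\text{or}\quad P_1^{\hat f}(\{T(\cdot,\hat f)=0\})>1-\epsilon.$$
   Context: Let $\Omega=\{0,1\}$ and let $\Omega^\infty$ be the set of infinite sequences $\omega=(\omega_1,\omega_2,\dots)$; $\omega^t=(\omega_1,\dots,\omega_t)$ denotes the prefix and also the cylinder set $\{\hat\omega:\hat\omega^t=\omega^t\}$; $\Omega^\infty$ carries the $\sigma$-algebra generated by cylinders. $\Delta(\Omega)$ is the set of probability distributions on $\Omega$. A forecasting strategy is a function $f:\bigcup_{t\ge 0}(\Omega\times\Delta(\Omega)\times\Delta(\Omega))^t\to\Delta(\Omega)$; $F$ is the set of all forecasting strategies. For $f=(f_0,f_1)$ and $\omega$, the play path $h=h(\omega,f_0,f_1)\in(\Omega\times\Delta(\Omega)\times\Delta(\Omega))^\infty$ is defined by $h^0=\emptyset$, $h^t=(h^{t-1},(\omega_t,f_0(h^{t-1}),f_1(h^{t-1})))$; $h^n$ is its prefix of length $n$ and $h_n$ its suffix of coordinates indexed by $t\ge n$. The induced measures satisfy $P_i^f(\omega^t)=\prod_{n=1}^t f_i(h^{n-1})[\omega_n]$. A comparison test is a function $T:\Omega^\infty\times F\times F\to\{0,\tfrac12,1\}$, measurable in $\omega$ for each fixed pair; $\{T(\cdot,f)=k\}=\{\omega:T(\omega,f_0,f_1)=k\}$.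 $T$ is anonymous if $T(\omega,f_0,f_1)=1-T(\omega,f_1,f_0)$ always. $T$ is non-counterfactual if there is $\hat T$ on $(\Omega\times\Delta(\Omega)\times\Delta(\Omega))^\infty$ with $T(\omega,f_0,f_1)=\hat T(h(\omega,f_0,f_1))$. $T$ is reasonable if for all $f$, $i\in\{0,1\}$ and measurable $A$: $P_i^f(A)>0$ and $P_{1-i}^f(A)=0$ imply $P_i^f(A\cap\{T(\cdot,f)=i\})>0$. Two triplets $(\omega,f_0,f_1),(\tilde\omega,\tilde f_0,\tilde f_1)$ eventually coincide if there exists $n>1$ such that $h_n(\omega,f_0,f_1)=h_n(\tilde\omega,\tilde f_0,\tilde f_1)$ and for all $1\le t\le n-1$, $i\in\{0,1\}$: $f_i(h^{t-1}(\omega,f_0,f_1))[\omega_t]>0$ and $\tilde f_i(h^{t-1}(\tilde\omega,\tilde f_0,\tilde f_1))[\tilde\omega_t]>0$. $T$ is a tail test if it takes equal values on any two triplets that eventually coincide. $T\sim\hat T$ means: for every pair $f$ and $i\in\{0,1\}$, $P_i^f(\{\omega:T(\omega,f_0,f_1)\ne\hat T(\omega,f_0,f_1)\})=0$. Likelihood ratios along $h=h(\omega,f_0,f_1)$: $D^t_{f_0}f_1(\omega)=\prod_{n=1}^t \frac{f_1(h^{n-1})[\omega_n]}{f_0(h^{n-1})[\omega_n]}$, $D^t_{f_1}f_0(\omega)=\prod_{n=1}^t \frac{f_0(h^{n-1})[\omega_n]}{f_1(h^{n-1})[\omega_n]}$. For $(j,k)\in\{(0,1),(1,0)\}$, $\overline{D}_{f_j}f_k=\limsup_t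 D^t_{f_j}f_k$, $\underline{D}_{f_j}f_k=\liminf_t D^t_{f_j}f_k$ if $f_j(h^{n-1})[\omega_n]>0$ for all $n$, and both $=+\infty$ otherwise; if they coincide and are finite the common value is the derivative $D_{f_j}f_k(\omega)$. The derivative test: $\mathcal{D}(\omega,f_0,f_1)=1$ if $D_{f_1}f_0(\omega)$ exists and equals $0$; $=0$ if $D_{f_0}f_1(\omega)$ exists and equals $0$; $=\tfrac12$ otherwise. *)

theory Defs
  imports "HOL-Probability.Probability"
begin

text \<open>Outcomes Omega = {0,1} are rendered as bool (False = 0, True = 1);
  Delta(Omega) is bool pmf; infinite sequences are nat \<Rightarrow> bool with
  omega_1 = w 0 (0-indexed). A history is a list of triples
  (outcome, forecast of expert 0, forecast of expert 1), oldest first.\<close>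

type_synonym hist_elem = "bool \<times> bool pmf \<times> bool pmf"
type_synonym fstrat = "hist_elem list \<Rightarrow> bool pmf"

definition sel :: "fstrat \<Rightarrow> fstrat \<Rightarrow> nat \<Rightarrow> fstrat" where
  "sel f0 f1 i = (if i = 0 then f0 else f1)"

fun hist :: "(nat \<Rightarrow> bool) \<Rightarrow> fstrat \<Rightarrow> fstrat \<Rightarrow> nat \<Rightarrow> hist_elem list" where
  "hist w f0 f1 0 = []"
| "hist w f0 f1 (Suc t) =
     hist w f0 f1 t @ [(w t, f0 (hist w f0 f1 t), f1 (hist w f0 f1 t))]"

text \<open>The full play path h(w,f0,f1) as an infinite sequence; path k is the
  coordinate with (1-based) index k+1.\<close>
definition path :: "(nat \<Rightarrow> bool) \<Rightarrow> fstrat \<Rightarrow> fstrat \<Rightarrow> nat \<Rightarrow> hist_elem" where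
  "path w f0 f1 k = (w k, f0 (hist w f0 f1 k), f1 (hist w f0 f1 k))"

definition Omega_inf :: "(nat \<Rightarrow> bool) measure" where
  "Omega_inf = PiM UNIV (\<lambda>_. count_space UNIV)"

definition cyl :: "(nat \<Rightarrow> bool) \<Rightarrow> nat \<Rightarrow> (nat \<Rightarrow> bool) set" where
  "cyl w t = {v. \<forall>n<t. v n = w n}"

definition induced :: "fstrat \<Rightarrow> fstrat \<Rightarrow> nat \<Rightarrow> (nat \<Rightarrow> bool) measure" where
  "induced f0 f1 i = (SOME M. prob_space M \<and> sets M = sets Omega_inf \<and>
     (\<forall>w t. emeasure M (cyl w t) =
        ennreal (\<Prod>n<t. pmf (sel f0 f1 i (hist w f0 f1 n)) (w n))))"

definition comparison_test :: "((nat \<Rightarrow> bool) \<Rightarrow> fstrat \<Rightarrow> fstrat \<Rightarrow> real) \<Rightarrow> bool" where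
  "comparison_test T \<longleftrightarrow>
     (\<forall>w f0 f1. T w f0 f1 \<in> {0, 1/2, 1}) \<and>
     (\<forall>f0 f1. (\<lambda>w. T w f0 f1) \<in> borel_measurable Omega_inf)"

definition anonymous :: "((nat \<Rightarrow> bool) \<Rightarrow> fstrat \<Rightarrow> fstrat \<Rightarrow> real) \<Rightarrow> bool" where
  "anonymous T \<longleftrightarrow> (\<forall>w f0 f1. T w f0 f1 = 1 - T w f1 f0)"

definition non_counterfactual :: "((nat \<Rightarrow> bool) \<Rightarrow> fstrat \<Rightarrow> fstrat \<Rightarrow> real) \<Rightarrow> bool" where
  "non_counterfactual T \<longleftrightarrow>
     (\<exists>That :: (nat \<Rightarrow> hist_elem) \<Rightarrow> real. \<forall>w f0 f1. T w f0 f1 = That (path w f0 f1))"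

definition reasonable :: "((nat \<Rightarrow> bool) \<Rightarrow> fstrat \<Rightarrow> fstrat \<Rightarrow> real) \<Rightarrow> bool" where
  "reasonable T \<longleftrightarrow>
     (\<forall>f0 f1 i A. i \<in> {0, 1} \<longrightarrow> A \<in> sets Omega_inf \<longrightarrow>
        measure (induced f0 f1 i) A > 0 \<longrightarrow> measure (induced f0 f1 (1 - i)) A = 0 \<longrightarrow>
        measure (induced f0 f1 i) (A \<inter> {w. T w f0 f1 = real i}) > 0)"

text \<open>Eventual coincidence, with the paper's 1-based index n > 1: the suffix
  h_n consists of the 0-based coordinates k \<ge> n - 1, and the positivity
  condition for 1 \<le> t \<le> n-1 concerns the 0-based steps k < n - 1.\<close>
definition eventually_coincide ::
  "(nat \<Rightarrow> bool) \<Rightarrow> fstrat \<Rightarrow> fstrat \<Rightarrow> (nat \<Rightarrow> bool) \<Rightarrow> fstrat \<Rightarrow> fstrat \<Rightarrow> bool" where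
  "eventually_coincide w f0 f1 v g0 g1 \<longleftrightarrow>
     (\<exists>n::nat. n > 1 \<and>
        (\<forall>k\<ge>n - 1. path w f0 f1 k = path v g0 g1 k) \<and>
        (\<forall>k<n - 1. \<forall>i\<in>{0::nat, 1}.
            pmf (sel f0 f1 i (hist w f0 f1 k)) (w k) > 0 \<and>
            pmf (sel g0 g1 i (hist v g0 g1 k)) (v k) > 0))"

definition tail_test :: "((nat \<Rightarrow> bool) \<Rightarrow> fstrat \<Rightarrow> fstrat \<Rightarrow> real) \<Rightarrow> bool" where
  "tail_test T \<longleftrightarrow>
     (\<forall>w f0 f1 v g0 g1. eventually_coincide w f0 f1 v g0 g1 \<longrightarrow> T w f0 f1 = T v g0 g1)"

definition test_equiv ::
  "((nat \<Rightarrow> bool) \<Rightarrow> fstrat \<Rightarrow> fstrat \<Rightarrow> real) \<Rightarrow> ((nat \<Rightarrow> bool) \<Rightarrow> fstrat \<Rightarrow> fstrat \<Rightarrow> real) \<Rightarrow> bool" where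
  "test_equiv T T' \<longleftrightarrow>
     (\<forall>f0 f1 i. i \<in> {0::nat, 1} \<longrightarrow> (AE w in induced f0 f1 i. T w f0 f1 = T' w f0 f1))"

definition lr :: "fstrat \<Rightarrow> fstrat \<Rightarrow> nat \<Rightarrow> (nat \<Rightarrow> bool) \<Rightarrow> nat \<Rightarrow> real" where
  "lr f0 f1 j w t = (\<Prod>n<t. pmf (sel f0 f1 (1 - j) (hist w f0 f1 n)) (w n)
                         / pmf (sel f0 f1 j (hist w f0 f1 n)) (w n))"

definition lr_pos :: "fstrat \<Rightarrow> fstrat \<Rightarrow> nat \<Rightarrow> (nat \<Rightarrow> bool) \<Rightarrow> bool" where
  "lr_pos f0 f1 j w \<longleftrightarrow> (\<forall>n. pmf (sel f0 f1 j (hist w f0 f1 n)) (w n) > 0)"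

definition upper_D :: "fstrat \<Rightarrow> fstrat \<Rightarrow> nat \<Rightarrow> (nat \<Rightarrow> bool) \<Rightarrow> ereal" where
  "upper_D f0 f1 j w = (if lr_pos f0 f1 j w then limsup (\<lambda>t. ereal (lr f0 f1 j w t)) else \<infinity>)"

definition lower_D :: "fstrat \<Rightarrow> fstrat \<Rightarrow> nat \<Rightarrow> (nat \<Rightarrow> bool) \<Rightarrow> ereal" where
  "lower_D f0 f1 j w = (if lr_pos f0 f1 j w then liminf (\<lambda>t. ereal (lr f0 f1 j w t)) else \<infinity>)"

definition D_exists_zero :: "fstrat \<Rightarrow> fstrat \<Rightarrow> nat \<Rightarrow> (nat \<Rightarrow> bool) \<Rightarrow> bool" where
  "D_exists_zero f0 f1 j w \<longleftrightarrow>
     upper_D f0 f1 j w = lower_D f0 f1 j w \<and> \<bar>upper_D f0 f1 j w\<bar> \<noteq> \<infinity> \<and>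
     upper_D f0 f1 j w = 0"

definition deriv_test :: "(nat \<Rightarrow> bool) \<Rightarrow> fstrat \<Rightarrow> fstrat \<Rightarrow> real" where
  "deriv_test w f0 f1 =
     (if D_exists_zero f0 f1 1 w then 1
      else if D_exists_zero f0 f1 0 w then 0
      else 1/2)"

end

theory Submission
  imports Defs
begin

text \<open>Suppose that for some \<open>\<epsilon>\<close> no pair \<open>(g\<^sub>0, g\<^sub>1)\<close> can make \<open>T\<close> reject the true forecaster with
  probability above \<open>1 - \<epsilon>\<close>. If \<open>T\<close> took a value \<open>x\<close> on a set \<open>B\<close> of positive \<open>P\<^sub>k\<^sup>f\<close>-measure on which both
  likelihood ratios are defined, a density argument gives a cylinder \<open>w\<^sup>t\<close> almost filled by \<open>B\<close>.
  Restarting \<open>(f\<^sub>0, f\<^sub>1)\<close> after the history \<open>h\<^sup>t(w)\<close>, with \<open>w\<^sub>1, \<dots>, w\<^sub>t\<close> forecast deterministically,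
  conditions \<open>P\<^sub>k\<^sup>f\<close> on that cylinder, and as a tail test \<open>T\<close> still returns \<open>x\<close> there: a manipulation.
  Hence, \<open>P\<^sub>i\<^sup>f\<close>-almost surely where both ratios are defined, \<open>T \<noteq> 1 - i\<close>, and \<open>T = i\<close> only where
  \<open>D\<^sup>t\<^sub>f\<^sub>i f\<^sub>1\<^sub>-\<^sub>i \<longrightarrow> 0\<close> (a \<open>P\<^sub>1\<^sub>-\<^sub>i\<close>-null set on which this ratio is frequently \<open>\<ge> b\<close> is \<open>P\<^sub>i\<close>-null).
  Reasonableness gives \<open>T = i\<close> almost surely where that ratio tends to \<open>0\<close>, and the opposite ratio
  tends to \<open>0\<close> only on a \<open>P\<^sub>i\<close>-null set. So \<open>T\<close> agrees with the derivative test almost surely.\<close>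

section \<open>Cylinders and sets determined by finite prefixes\<close>

definition seq_prefix :: "(nat \<Rightarrow> 'a) \<Rightarrow> nat \<Rightarrow> 'a list" where
  "seq_prefix w s = map w [0..<s]"

lemma length_seq_prefix [simp]: "length (seq_prefix w s) = s"
  by (simp add: seq_prefix_def)

lemma seq_prefix_0 [simp]: "seq_prefix w 0 = []"
  by (simp add: seq_prefix_def)

lemma seq_prefix_Suc: "seq_prefix w (Suc n) = seq_prefix w n @ [w n]"
  by (simp add: seq_prefix_def)

lemma seq_prefix_eq_iff: "seq_prefix v s = seq_prefix w s \<longleftrightarrow> (\<forall>n<s. v n = w n)"
  unfolding seq_prefix_def map_eq_conv by auto

lemma take_seq_prefix: "take m (seq_prefix w n) = seq_prefix w (min m n)"
  by (simp add: seq_prefix_def take_map min_def)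

lemma nth_seq_prefix: "m < n \<Longrightarrow> seq_prefix w n ! m = w m"
  by (simp add: seq_prefix_def)

lemma cyl_eq_seq_prefix: "cyl w s = {v. seq_prefix v s = seq_prefix w s}"
  by (auto simp: cyl_def seq_prefix_eq_iff)

lemma cyl_cong: "u \<in> cyl w t \<Longrightarrow> cyl u t = cyl w t"
  by (auto simp: cyl_def)

lemma length_hist [simp]: "length (hist w f0 f1 n) = n"
  by (induction n) auto

lemma hist_cong: "(\<forall>m<n. v m = w m) \<Longrightarrow> hist v f0 f1 n = hist w f0 f1 n"
  by (induction n) auto

lemma take_hist: "take n (hist w f0 f1 (n + m)) = hist w f0 f1 n"
  by (induction m) auto

definition determined :: "nat \<Rightarrow> (nat \<Rightarrow> 'a) set \<Rightarrow> bool" where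
  "determined s F \<longleftrightarrow> (\<forall>v w. (\<forall>n<s. v n = w n) \<longrightarrow> (v \<in> F \<longleftrightarrow> w \<in> F))"

lemma determined_Collect:
  "(\<And>v w. \<forall>n<s. v n = w n \<Longrightarrow> P v \<longleftrightarrow> P w) \<Longrightarrow> determined s {w. P w}"
  unfolding determined_def by blast

lemma determined_Compl: "determined s F \<Longrightarrow> determined s (- F)"
  unfolding determined_def by blast

lemma determined_eq_UN_seq_prefix:
  "determined s F \<Longrightarrow> F = (\<Union>l\<in>(\<lambda>w. seq_prefix w s) ` F. {v. seq_prefix v s = l})"
  unfolding determined_def by (auto simp: seq_prefix_eq_iff)

lemma finite_seq_prefix_image: "finite ((\<lambda>w. seq_prefix w s) ` (F :: (nat \<Rightarrow> bool) set))"
  by (rule finite_subset[OF _ finite_lists_length_eq[of "UNIV::bool set" s]]) auto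

lemma determined_if_prod_algebra:
  assumes "X \<in> prod_algebra UNIV (\<lambda>_::nat. count_space (UNIV :: 'a set))"
  shows "\<exists>s. determined s X"
proof -
  obtain J E where X: "X = prod_emb UNIV (\<lambda>_. count_space UNIV) J (\<Pi>\<^sub>E j\<in>J. E j)" "finite J"
    using assms by (metis prod_algebraE)
  obtain s where "\<forall>j\<in>J. j < s"
    using X(2) finite_nat_bounded by (auto simp: subset_eq)
  then have "determined s X"
    unfolding determined_def by (auto simp: X(1) prod_emb_def PiE_iff)
  then show ?thesis ..
qed

lemma space_Omega_inf [simp]: "space Omega_inf = UNIV"
  by (simp add: Omega_inf_def space_PiM)

lemma sets_Omega_inf: "sets Omega_inf = sigma_sets UNIV (prod_algebra UNIV (\<lambda>_. count_space UNIV))"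
  unfolding Omega_inf_def by (simp add: sets_PiM)

lemma UNIV_in_Omega_inf [simp]: "UNIV \<in> sets Omega_inf"
  using sets.top[of Omega_inf] by simp

lemma coordinate_in_Omega_inf: "{v. v n = b} \<in> sets Omega_inf"
proof -
  have "(\<lambda>v. v n) \<in> measurable Omega_inf (count_space UNIV)"
    unfolding Omega_inf_def by (rule measurable_component_singleton) simp
  then have "(\<lambda>v. v n) -` {b} \<inter> space Omega_inf \<in> sets Omega_inf"
    by (rule measurable_sets) simp
  then show ?thesis by (simp add: vimage_def)
qed

lemma seq_prefix_set_in_Omega_inf: "{v. seq_prefix v s = l} \<in> sets Omega_inf"
proof (cases "length l = s \<and> s \<noteq> 0")
  case True
  then have "{v. seq_prefix v s = l} = (\<Inter>n\<in>{..<s}. {v. v n = l ! n})"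
    by (auto simp: seq_prefix_def list_eq_iff_nth_eq)
  also have "\<dots> \<in> sets Omega_inf"
    using True by (intro sets.finite_INT) (auto simp: coordinate_in_Omega_inf)
  finally show ?thesis .
next
  case False
  then have "{v. seq_prefix v s = l} = {} \<or> {v. seq_prefix v s = l} = UNIV"
    by auto
  then show ?thesis by auto
qed

lemma cyl_in_Omega_inf [simp]: "cyl w s \<in> sets Omega_inf"
  unfolding cyl_eq_seq_prefix by (rule seq_prefix_set_in_Omega_inf)

lemma determined_in_Omega_inf: "determined s F \<Longrightarrow> F \<in> sets Omega_inf"
  by (subst determined_eq_UN_seq_prefix, assumption)
     (intro sets.finite_UN finite_seq_prefix_image ballI seq_prefix_set_in_Omega_inf)

lemma eventually_determined_in_Omega_inf:
  "(\<And>s. determined s {w. Q w s}) \<Longrightarrow> {w. \<exists>s. Q w s} \<in> sets Omega_inf"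
proof -
  assume "\<And>s. determined s {w. Q w s}"
  then have "(\<Union>s. {w. Q w s}) \<in> sets Omega_inf"
    by (intro sets.countable_nat_UN) (auto intro: determined_in_Omega_inf)
  then show ?thesis by (simp add: Collect_ex_eq)
qed

lemma measurable_test_set:
  "comparison_test T \<Longrightarrow> {w. T w g0 g1 = x} \<in> sets Omega_inf"
  using measurable_sets[of "\<lambda>w. T w g0 g1" Omega_inf borel "{x}"]
  by (simp add: comparison_test_def vimage_def)

lemma measure_determined_sum:
  assumes "finite_measure M" "sets M = sets Omega_inf" "B \<in> sets Omega_inf" "determined s F"
  shows "measure M (B \<inter> F) = (\<Sum>l\<in>(\<lambda>w. seq_prefix w s) ` F. measure M (B \<inter> {v. seq_prefix v s = l}))"
proof -
  interpret finite_measure M by fact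
  have "B \<inter> F = (\<Union>l\<in>(\<lambda>w. seq_prefix w s) ` F. B \<inter> {v. seq_prefix v s = l})"
    using determined_eq_UN_seq_prefix[OF assms(4)] by blast
  also have "measure M \<dots> = (\<Sum>l\<in>(\<lambda>w. seq_prefix w s) ` F. measure M (B \<inter> {v. seq_prefix v s = l}))"
    using assms(2,3) seq_prefix_set_in_Omega_inf
    by (intro finite_measure_finite_Union finite_seq_prefix_image) (auto simp: disjoint_family_on_def)
  finally show ?thesis .
qed

lemma measure_determined_le:
  assumes M1: "finite_measure M1" "sets M1 = sets Omega_inf" and B1: "B1 \<in> sets Omega_inf"
    and M2: "finite_measure M2" "sets M2 = sets Omega_inf" and B2: "B2 \<in> sets Omega_inf"
    and F: "determined s F"
    and le: "\<And>w. w \<in> F \<Longrightarrow> c1 * measure M1 (B1 \<inter> cyl w s) \<le> c2 * measure M2 (B2 \<inter> cyl w s)"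
  shows "c1 * measure M1 (B1 \<inter> F) \<le> c2 * measure M2 (B2 \<inter> F)"
proof -
  have "c1 * measure M1 (B1 \<inter> F) = (\<Sum>l\<in>(\<lambda>w. seq_prefix w s) ` F. c1 * measure M1 (B1 \<inter> {v. seq_prefix v s = l}))"
    by (simp add: measure_determined_sum[OF M1 B1 F] sum_distrib_left)
  also have "\<dots> \<le> (\<Sum>l\<in>(\<lambda>w. seq_prefix w s) ` F. c2 * measure M2 (B2 \<inter> {v. seq_prefix v s = l}))"
    using le by (intro sum_mono) (auto simp: cyl_eq_seq_prefix)
  also have "\<dots> = c2 * measure M2 (B2 \<inter> F)"
    by (simp add: measure_determined_sum[OF M2 B2 F] sum_distrib_left)
  finally show ?thesis .
qed

text \<open>A stopping rule: split \<open>{w. \<exists>s. Q w s}\<close> according to the first time \<open>s\<close> with \<open>Q w s\<close>.\<close>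

lemma measure_stopping_le:
  assumes M1: "finite_measure M1" "sets M1 = sets Omega_inf" and B1: "B1 \<in> sets Omega_inf"
    and M2: "finite_measure M2" "sets M2 = sets Omega_inf" and B2: "B2 \<in> sets Omega_inf"
    and Q: "\<And>s. determined s {w. Q w s}"
    and le: "\<And>w s. Q w s \<Longrightarrow> c1 * measure M1 (B1 \<inter> cyl w s) \<le> c2 * measure M2 (B2 \<inter> cyl w s)"
  shows "c1 * measure M1 (B1 \<inter> {w. \<exists>s. Q w s}) \<le> c2 * measure M2 (B2 \<inter> {w. \<exists>s. Q w s})"
proof -
  define F where "F s = {w. Q w s \<and> (\<forall>s'<s. \<not> Q w s')}" for s
  have F: "determined s (F s)" for s
    unfolding F_def
  proof (rule determined_Collect)
    fix v w :: "nat \<Rightarrow> bool" assume "\<forall>n<s. v n = w n"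
    then have "Q v s' \<longleftrightarrow> Q w s'" if "s' \<le> s" for s'
      using Q[of s'] that unfolding determined_def by auto
    then show "(Q v s \<and> (\<forall>s'<s. \<not> Q v s')) \<longleftrightarrow> (Q w s \<and> (\<forall>s'<s. \<not> Q w s'))"
      by (meson less_imp_le order_refl)
  qed
  have disj: "disjoint_family F"
    unfolding disjoint_family_on_def F_def by (auto dest: linorder_neqE_nat)
  have U: "{w. \<exists>s. Q w s} = (\<Union>s. F s)"
    unfolding F_def by (auto intro: LeastI dest: not_less_Least)
  have sums: "(\<lambda>s. c * measure M (B \<inter> F s)) sums (c * measure M (B \<inter> {w. \<exists>s. Q w s}))"
    if "finite_measure M" "sets M = sets Omega_inf" "B \<in> sets Omega_inf" for M B c
  proof -
    interpret finite_measure M by fact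
    have "disjoint_family (\<lambda>s. B \<inter> F s)"
      using disj by (rule disjoint_family_on_bisimulation) auto
    then have "(\<lambda>s. measure M (B \<inter> F s)) sums measure M (\<Union>s. B \<inter> F s)"
      using that F determined_in_Omega_inf by (intro finite_measure_UNION) auto
    then show ?thesis by (simp add: U sums_mult)
  qed
  show ?thesis
    by (rule sums_le[OF _ sums[OF M1 B1] sums[OF M2 B2]])
       (rule measure_determined_le[OF M1 B1 M2 B2 F], auto simp: F_def le)
qed

section \<open>The induced measures\<close>

text \<open>\<open>P\<^sub>i\<^sup>f\<close> is constructed as the image of a product of independent draws, one from
  \<open>f\<^sub>i(h)\<close> for every finite prefix: \<open>choice_seq y\<close> follows the draws \<open>y\<close> along the prefixes it produces.\<close>

fun choice_prefix :: "(bool list \<Rightarrow> bool) \<Rightarrow> nat \<Rightarrow> bool list" where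
  "choice_prefix y 0 = []"
| "choice_prefix y (Suc n) = choice_prefix y n @ [y (choice_prefix y n)]"

definition choice_seq :: "(bool list \<Rightarrow> bool) \<Rightarrow> nat \<Rightarrow> bool" where
  "choice_seq y n = y (choice_prefix y n)"

lemma seq_prefix_choice_seq: "seq_prefix (choice_seq y) n = choice_prefix y n"
  by (induction n) (simp_all add: seq_prefix_Suc choice_seq_def)

lemma choice_prefix_eq_iff:
  "choice_prefix y n = l \<longleftrightarrow> length l = n \<and> (\<forall>m<n. y (take m l) = l ! m)"
proof
  assume "choice_prefix y n = l"
  then have l: "l = seq_prefix (choice_seq y) n" by (simp add: seq_prefix_choice_seq)
  have "y (take m l) = l ! m" if "m < n" for m
    using that unfolding l take_seq_prefix nth_seq_prefix[OF that]
    by (simp add: seq_prefix_choice_seq choice_seq_def)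
  then show "length l = n \<and> (\<forall>m<n. y (take m l) = l ! m)" by (simp add: l)
next
  assume l: "length l = n \<and> (\<forall>m<n. y (take m l) = l ! m)"
  have "m \<le> n \<Longrightarrow> choice_prefix y m = take m l" for m
    by (induction m) (use l in \<open>auto simp: take_Suc_conv_app_nth\<close>)
  then show "choice_prefix y n = l" using l by simp
qed

definition seq_of_list :: "bool list \<Rightarrow> nat \<Rightarrow> bool" where
  "seq_of_list l n = (n < length l \<and> l ! n)"

definition forecast_of_prefix :: "fstrat \<Rightarrow> fstrat \<Rightarrow> nat \<Rightarrow> bool list \<Rightarrow> bool pmf" where
  "forecast_of_prefix f0 f1 i l = sel f0 f1 i (hist (seq_of_list l) f0 f1 (length l))"

lemma forecast_of_seq_prefix:
  "forecast_of_prefix f0 f1 i (seq_prefix w n) = sel f0 f1 i (hist w f0 f1 n)"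
proof -
  have "hist (seq_of_list (seq_prefix w n)) f0 f1 n = hist w f0 f1 n"
    by (rule hist_cong) (simp add: seq_of_list_def nth_seq_prefix)
  then show ?thesis by (simp add: forecast_of_prefix_def)
qed

definition choice_space :: "fstrat \<Rightarrow> fstrat \<Rightarrow> nat \<Rightarrow> (bool list \<Rightarrow> bool) measure" where
  "choice_space f0 f1 i = PiM UNIV (\<lambda>l. measure_pmf (forecast_of_prefix f0 f1 i l))"

lemma space_choice_space [simp]: "space (choice_space f0 f1 i) = UNIV"
  unfolding choice_space_def space_PiM space_measure_pmf by (rule PiE_UNIV)

lemma prob_space_choice_space: "prob_space (choice_space f0 f1 i)"
  unfolding choice_space_def by (rule prob_space_PiM) (simp add: prob_space_measure_pmf)

lemma measurable_choice_component:
  "(\<lambda>y. y l) \<in> measurable (choice_space f0 f1 i) (count_space UNIV)"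
proof -
  have "(\<lambda>y. y l) \<in> measurable (choice_space f0 f1 i) (measure_pmf (forecast_of_prefix f0 f1 i l))"
    unfolding choice_space_def by (rule measurable_component_singleton) simp
  then show ?thesis
    by (simp add: measurable_cong_sets[OF refl sets_measure_pmf_count_space])
qed

lemma measurable_choice_prefix:
  "(\<lambda>y. choice_prefix y n) \<in> measurable (choice_space f0 f1 i) (count_space UNIV)"
proof (subst measurable_count_space_eq2_countable, intro conjI ballI)
  fix l :: "bool list"
  have "(\<lambda>y. choice_prefix y n) -` {l} \<inter> space (choice_space f0 f1 i) =
      {y. length l = n \<and> (\<forall>m<n. y (take m l) = l ! m)}"
    by (simp add: vimage_def choice_prefix_eq_iff)
  also have "\<dots> = (if length l = n then (\<Inter>m\<in>{..<n}. (\<lambda>y. y (take m l)) -` {l ! m}) else {})"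
    by auto
  also have "\<dots> \<in> sets (choice_space f0 f1 i)"
  proof -
    have "(\<lambda>y. y l') -` {b} \<in> sets (choice_space f0 f1 i)" for l' b
      using measurable_sets[OF measurable_choice_component, of "{b}"] by simp
    then show ?thesis
      using sets.top[of "choice_space f0 f1 i"] by (auto intro!: sets.countable_INT'')
  qed
  finally show "(\<lambda>y. choice_prefix y n) -` {l} \<inter> space (choice_space f0 f1 i) \<in> sets (choice_space f0 f1 i)" .
qed simp

lemma measurable_choice_seq: "choice_seq \<in> measurable (choice_space f0 f1 i) Omega_inf"
  unfolding Omega_inf_def
proof (rule measurable_PiM_single')
  fix n :: nat
  show "(\<lambda>y. choice_seq y n) \<in> measurable (choice_space f0 f1 i) (count_space UNIV)"
    unfolding choice_seq_def
    by (rule measurable_compose_countable'[where f="\<lambda>l y. y l" and I=UNIV])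
       (auto intro: measurable_choice_component measurable_choice_prefix)
qed auto

lemma emeasure_choice_seq_cyl:
  "emeasure (choice_space f0 f1 i) (choice_seq -` cyl w t) =
     ennreal (\<Prod>n<t. pmf (sel f0 f1 i (hist w f0 f1 n)) (w n))"
proof -
  let ?J = "(\<lambda>n. seq_prefix w n) ` {..<t}"
  let ?M = "\<lambda>l. measure_pmf (forecast_of_prefix f0 f1 i l)"
  have inj: "inj_on (\<lambda>n. seq_prefix w n) {..<t}"
    by (rule inj_onI) (metis length_seq_prefix)
  have "y \<in> choice_seq -` cyl w t \<longleftrightarrow> (\<forall>n<t. y (seq_prefix w n) = w n)" for y
  proof -
    have "y \<in> choice_seq -` cyl w t \<longleftrightarrow> choice_prefix y t = seq_prefix w t"
      by (simp add: cyl_eq_seq_prefix seq_prefix_choice_seq)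
    also have "\<dots> \<longleftrightarrow> (\<forall>n<t. y (seq_prefix w n) = w n)"
      unfolding choice_prefix_eq_iff by (simp add: take_seq_prefix nth_seq_prefix)
    finally show ?thesis .
  qed
  then have "choice_seq -` cyl w t = prod_emb UNIV ?M ?J (Pi\<^sub>E ?J (\<lambda>l. {w (length l)}))"
    by (auto simp: prod_emb_def PiE_iff space_PiM)
  then have "emeasure (choice_space f0 f1 i) (choice_seq -` cyl w t) =
      (\<Prod>l\<in>?J. emeasure (?M l) {w (length l)})"
    unfolding choice_space_def
    by (simp only:) (rule emeasure_PiM_emb, auto simp: prob_space_measure_pmf)
  also have "\<dots> = (\<Prod>n<t. emeasure (?M (seq_prefix w n)) {w n})"
    by (subst prod.reindex[OF inj]) simp
  also have "\<dots> = (\<Prod>n<t. ennreal (pmf (sel f0 f1 i (hist w f0 f1 n)) (w n)))"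
    by (simp add: forecast_of_seq_prefix emeasure_pmf_single)
  also have "\<dots> = ennreal (\<Prod>n<t. pmf (sel f0 f1 i (hist w f0 f1 n)) (w n))"
    by (simp add: prod_ennreal)
  finally show ?thesis .
qed

lemma induced_exists:
  "\<exists>M. prob_space M \<and> sets M = sets Omega_inf \<and>
     (\<forall>w t. emeasure M (cyl w t) = ennreal (\<Prod>n<t. pmf (sel f0 f1 i (hist w f0 f1 n)) (w n)))"
proof (intro exI conjI allI)
  let ?M = "distr (choice_space f0 f1 i) Omega_inf choice_seq"
  show "prob_space ?M"
    by (rule prob_space.prob_space_distr[OF prob_space_choice_space measurable_choice_seq])
  show "sets ?M = sets Omega_inf" by simp
  show "emeasure ?M (cyl w t) = ennreal (\<Prod>n<t. pmf (sel f0 f1 i (hist w f0 f1 n)) (w n))" for w t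
    using emeasure_choice_seq_cyl[of f0 f1 i w t]
    by (subst emeasure_distr[OF measurable_choice_seq]) auto
qed

lemma
  shows prob_space_induced [simp]: "prob_space (induced f0 f1 i)"
    and sets_induced [simp]: "sets (induced f0 f1 i) = sets Omega_inf"
    and emeasure_induced_cyl:
      "emeasure (induced f0 f1 i) (cyl w t) = ennreal (\<Prod>n<t. pmf (sel f0 f1 i (hist w f0 f1 n)) (w n))"
  using someI_ex[OF induced_exists[of f0 f1 i]] unfolding induced_def[symmetric] by auto

lemma finite_measure_induced: "finite_measure (induced f0 f1 i)"
  using prob_space_induced prob_space_def by blast

lemma space_induced [simp]: "space (induced f0 f1 i) = UNIV"
  using sets_eq_imp_space_eq[OF sets_induced[of f0 f1 i]] by simp

lemma measure_induced_cyl: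
  "measure (induced f0 f1 i) (cyl w t) = (\<Prod>n<t. pmf (sel f0 f1 i (hist w f0 f1 n)) (w n))"
  using emeasure_induced_cyl by (simp add: measure_def prod_nonneg)

lemma measure_induced_mono:
  "A \<subseteq> B \<Longrightarrow> B \<in> sets Omega_inf \<Longrightarrow> measure (induced f0 f1 i) A \<le> measure (induced f0 f1 i) B"
  by (rule finite_measure.finite_measure_mono[OF finite_measure_induced]) simp_all

lemma null_sets_induced_iff:
  "S \<in> null_sets (induced f0 f1 i) \<longleftrightarrow> S \<in> sets Omega_inf \<and> measure (induced f0 f1 i) S = 0"
  using finite_measure.emeasure_eq_measure[OF finite_measure_induced, of f0 f1 i S]
  by (auto simp: null_sets_def)

lemma induced_eqI_cyl:
  assumes "finite_measure M" "sets M = sets Omega_inf"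
    and eq: "\<And>w t. emeasure M (cyl w t) = ennreal (\<Prod>n<t. pmf (sel f0 f1 i (hist w f0 f1 n)) (w n))"
  shows "induced f0 f1 i = M"
proof (rule measure_eqI_generator_eq[where E="prod_algebra UNIV (\<lambda>_::nat. count_space (UNIV::bool set))"
      and \<Omega>=UNIV and A="\<lambda>_. UNIV"])
  show "Int_stable (prod_algebra UNIV (\<lambda>_::nat. count_space (UNIV::bool set)))"
    by (rule Int_stable_prod_algebra)
  show "range (\<lambda>_. UNIV) \<subseteq> prod_algebra UNIV (\<lambda>_::nat. count_space (UNIV::bool set))"
    using space_in_prod_algebra[of UNIV "\<lambda>_::nat. count_space (UNIV::bool set)"] by simp
  show "emeasure (induced f0 f1 i) UNIV \<noteq> \<infinity>"
    using finite_measure.emeasure_finite[OF finite_measure_induced] by simp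
  fix X assume "X \<in> prod_algebra UNIV (\<lambda>_::nat. count_space (UNIV::bool set))"
  then obtain s where X_det: "determined s X" by (metis determined_if_prod_algebra)
  have "measure (induced f0 f1 i) (UNIV \<inter> X) = measure M (UNIV \<inter> X)"
    unfolding measure_determined_sum[OF finite_measure_induced sets_induced UNIV_in_Omega_inf X_det]
      measure_determined_sum[OF assms(1,2) UNIV_in_Omega_inf X_det]
    using eq emeasure_induced_cyl by (intro sum.cong) (auto simp: measure_def cyl_eq_seq_prefix)
  then show "emeasure (induced f0 f1 i) X = emeasure M X"
    using finite_measure.emeasure_eq_measure[OF finite_measure_induced]
      finite_measure.emeasure_eq_measure[OF assms(1)] by simp
qed (use assms(2) sets_Omega_inf in auto)

definition positive_upto :: "fstrat \<Rightarrow> fstrat \<Rightarrow> nat \<Rightarrow> (nat \<Rightarrow> bool) \<Rightarrow> nat \<Rightarrow> bool" where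
  "positive_upto f0 f1 j w s \<longleftrightarrow> (\<forall>n<s. pmf (sel f0 f1 j (hist w f0 f1 n)) (w n) > 0)"

lemma positive_upto_if_lr_pos: "lr_pos f0 f1 j w \<Longrightarrow> positive_upto f0 f1 j w s"
  by (simp add: positive_upto_def lr_pos_def)

lemma lr_nonneg: "lr f0 f1 j w t \<ge> 0"
  unfolding lr_def by (intro prod_nonneg) auto

lemma lr_cong:
  assumes "\<forall>m<s. v m = w m" shows "lr f0 f1 j v s = lr f0 f1 j w s"
proof -
  have "hist v f0 f1 n = hist w f0 f1 n" "v n = w n" if "n < s" for n
    using assms that by (auto intro: hist_cong)
  then show ?thesis unfolding lr_def by (intro prod.cong) simp_all
qed

lemma positive_upto_cong:
  assumes "\<forall>m<s. v m = w m" shows "positive_upto f0 f1 j v s = positive_upto f0 f1 j w s"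
proof -
  have "hist v f0 f1 n = hist w f0 f1 n" "v n = w n" if "n < s" for n
    using assms that by (auto intro: hist_cong)
  then show ?thesis unfolding positive_upto_def by simp
qed

lemma measure_induced_cyl_lr:
  assumes "positive_upto f0 f1 j w s"
  shows "measure (induced f0 f1 (1 - j)) (cyl w s) = lr f0 f1 j w s * measure (induced f0 f1 j) (cyl w s)"
proof -
  let ?p = "\<lambda>i n. pmf (sel f0 f1 i (hist w f0 f1 n)) (w n)"
  have "lr f0 f1 j w s * measure (induced f0 f1 j) (cyl w s) = (\<Prod>n<s. ?p (1 - j) n / ?p j n * ?p j n)"
    by (simp only: lr_def measure_induced_cyl prod.distrib)
  also have "\<dots> = (\<Prod>n<s. ?p (1 - j) n)"
    using assms by (intro prod.cong) (auto simp: positive_upto_def)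
  finally show ?thesis by (simp add: measure_induced_cyl)
qed

lemma lr_ge_imp_measure_le:
  assumes Q: "\<And>s. determined s {w. Q w s}"
    and lr: "\<And>w s. Q w s \<Longrightarrow> positive_upto f0 f1 j w s \<and> lr f0 f1 j w s \<ge> b"
  shows "b * measure (induced f0 f1 j) {w. \<exists>s. Q w s} \<le> measure (induced f0 f1 (1 - j)) {w. \<exists>s. Q w s}"
proof -
  have "b * measure (induced f0 f1 j) (UNIV \<inter> cyl w s) \<le> 1 * measure (induced f0 f1 (1 - j)) (UNIV \<inter> cyl w s)"
    if "Q w s" for w s
    using lr[OF that] measure_induced_cyl_lr[of f0 f1 j w s] by (simp add: mult_right_mono)
  then have "b * measure (induced f0 f1 j) (UNIV \<inter> {w. \<exists>s. Q w s}) \<le> 1 * measure (induced f0 f1 (1 - j)) (UNIV \<inter> {w. \<exists>s. Q w s})"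
    by (rule measure_stopping_le[OF finite_measure_induced sets_induced UNIV_in_Omega_inf
        finite_measure_induced sets_induced UNIV_in_Omega_inf Q])
  then show ?thesis by simp
qed

lemma lr_le_imp_measure_le:
  assumes Q: "\<And>s. determined s {w. Q w s}"
    and lr: "\<And>w s. Q w s \<Longrightarrow> positive_upto f0 f1 j w s \<and> lr f0 f1 j w s \<le> a"
  shows "measure (induced f0 f1 (1 - j)) {w. \<exists>s. Q w s} \<le> a * measure (induced f0 f1 j) {w. \<exists>s. Q w s}"
proof -
  have "1 * measure (induced f0 f1 (1 - j)) (UNIV \<inter> cyl w s) \<le> a * measure (induced f0 f1 j) (UNIV \<inter> cyl w s)"
    if "Q w s" for w s
    using lr[OF that] measure_induced_cyl_lr[of f0 f1 j w s] by (simp add: mult_right_mono)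
  then have "1 * measure (induced f0 f1 (1 - j)) (UNIV \<inter> {w. \<exists>s. Q w s}) \<le> a * measure (induced f0 f1 j) (UNIV \<inter> {w. \<exists>s. Q w s})"
    by (rule measure_stopping_le[OF finite_measure_induced sets_induced UNIV_in_Omega_inf
        finite_measure_induced sets_induced UNIV_in_Omega_inf Q])
  then show ?thesis by simp
qed

definition lr_below :: "fstrat \<Rightarrow> fstrat \<Rightarrow> nat \<Rightarrow> real \<Rightarrow> (nat \<Rightarrow> bool) set" where
  "lr_below f0 f1 j a = {w. \<exists>s. positive_upto f0 f1 j w s \<and> lr f0 f1 j w s \<le> a}"

definition lr_vanishing :: "fstrat \<Rightarrow> fstrat \<Rightarrow> nat \<Rightarrow> (nat \<Rightarrow> bool) set" where
  "lr_vanishing f0 f1 j = (\<Inter>m. lr_below f0 f1 j (1 / real (Suc m)))"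

lemma determined_lr_le:
  "determined s {w. positive_upto f0 f1 j w s \<and> lr f0 f1 j w s \<le> a}"
  by (rule determined_Collect) (metis positive_upto_cong lr_cong)

lemma lr_below_in_Omega_inf: "lr_below f0 f1 j a \<in> sets Omega_inf"
  unfolding lr_below_def by (rule eventually_determined_in_Omega_inf[OF determined_lr_le])

lemma lr_vanishing_in_Omega_inf: "lr_vanishing f0 f1 j \<in> sets Omega_inf"
  unfolding lr_vanishing_def by (intro sets.countable_INT) (auto intro: lr_below_in_Omega_inf)

lemma measure_lr_below_le:
  assumes "a \<ge> 0" shows "measure (induced f0 f1 (1 - j)) (lr_below f0 f1 j a) \<le> a"
proof -
  have "measure (induced f0 f1 (1 - j)) (lr_below f0 f1 j a) \<le> a * measure (induced f0 f1 j) (lr_below f0 f1 j a)"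
    unfolding lr_below_def by (rule lr_le_imp_measure_le[OF determined_lr_le]) auto
  also have "\<dots> \<le> a"
    using assms prob_space.prob_le_1[OF prob_space_induced] by (simp add: mult_left_le)
  finally show ?thesis .
qed

lemma measure_lr_vanishing: "measure (induced f0 f1 (1 - j)) (lr_vanishing f0 f1 j) = 0"
proof (rule ccontr)
  let ?Z = "measure (induced f0 f1 (1 - j)) (lr_vanishing f0 f1 j)"
  assume "?Z \<noteq> 0"
  then have "?Z > 0" using measure_nonneg[of _ "lr_vanishing f0 f1 j"] by (simp add: order_less_le)
  then obtain m where "inverse (real (Suc m)) < ?Z" using reals_Archimedean by blast
  moreover have "?Z \<le> measure (induced f0 f1 (1 - j)) (lr_below f0 f1 j (1 / real (Suc m)))"
    by (rule measure_induced_mono) (auto simp: lr_vanishing_def lr_below_in_Omega_inf)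
  ultimately show False
    using measure_lr_below_le[of "1 / real (Suc m)" f0 f1 j] by (simp add: inverse_eq_divide)
qed

lemma lr_vanishingI:
  assumes "lr_pos f0 f1 j w" "(\<lambda>t. lr f0 f1 j w t) \<longlonglongrightarrow> 0"
  shows "w \<in> lr_vanishing f0 f1 j"
proof -
  have "w \<in> lr_below f0 f1 j (1 / real (Suc m))" for m
  proof -
    obtain t where "lr f0 f1 j w t < 1 / real (Suc m)"
      using order_tendstoD(2)[OF assms(2), of "1 / real (Suc m)"] unfolding eventually_sequentially
      by auto
    then show ?thesis
      using positive_upto_if_lr_pos[OF assms(1)] by (auto simp: lr_below_def intro: less_imp_le)
  qed
  then show ?thesis unfolding lr_vanishing_def by blast
qed

lemma null_sets_not_lr_pos: "{w. \<not> lr_pos f0 f1 j w} \<in> null_sets (induced f0 f1 j)"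
proof -
  define Z where "Z n = {w. pmf (sel f0 f1 j (hist w f0 f1 n)) (w n) = 0}" for n
  have Z: "determined (Suc n) (Z n)" for n
    unfolding Z_def
  proof (rule determined_Collect)
    fix v w :: "nat \<Rightarrow> bool" assume "\<forall>m<Suc n. v m = w m"
    then have "hist v f0 f1 n = hist w f0 f1 n" "v n = w n" by (auto intro: hist_cong)
    then show "pmf (sel f0 f1 j (hist v f0 f1 n)) (v n) = 0 \<longleftrightarrow> pmf (sel f0 f1 j (hist w f0 f1 n)) (w n) = 0"
      by simp
  qed
  have "measure (induced f0 f1 j) (cyl w (Suc n)) = 0" if "w \<in> Z n" for w n
    using that by (simp add: measure_induced_cyl Z_def)
  then have "1 * measure (induced f0 f1 j) (UNIV \<inter> Z n) \<le> 0 * measure (induced f0 f1 j) (UNIV \<inter> Z n)" for n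
    by (intro measure_determined_le[OF finite_measure_induced sets_induced UNIV_in_Omega_inf
          finite_measure_induced sets_induced UNIV_in_Omega_inf Z]) simp
  then have "Z n \<in> null_sets (induced f0 f1 j)" for n
    using determined_in_Omega_inf[OF Z] by (simp add: null_sets_induced_iff order_antisym_conv)
  moreover have "{w. \<not> lr_pos f0 f1 j w} = (\<Union>n. Z n)"
    unfolding lr_pos_def Z_def using pmf_nonneg by (auto simp: order_less_le)
  ultimately show ?thesis by (simp add: null_sets_UN)
qed

lemma lr_pos_in_Omega_inf: "{w. lr_pos f0 f1 j w} \<in> sets Omega_inf"
proof -
  have "{w. \<not> lr_pos f0 f1 j w} \<in> sets Omega_inf"
    using null_sets_not_lr_pos[of f0 f1 j] null_sets_induced_iff by blast
  moreover have "{w. lr_pos f0 f1 j w} = space Omega_inf - {w. \<not> lr_pos f0 f1 j w}" by auto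
  ultimately show ?thesis using sets.compl_sets by metis
qed

lemma frequently_lr_ge_in_Omega_inf:
  "{w. \<exists>\<^sub>F s in sequentially. lr f0 f1 j w s \<ge> b} \<in> sets Omega_inf"
proof -
  have "determined s {w. N \<le> s \<and> lr f0 f1 j w s \<ge> b}" for N s
  proof (rule determined_Collect)
    fix v w :: "nat \<Rightarrow> bool" assume "\<forall>n<s. v n = w n"
    then show "N \<le> s \<and> lr f0 f1 j v s \<ge> b \<longleftrightarrow> N \<le> s \<and> lr f0 f1 j w s \<ge> b"
      by (simp only: lr_cong)
  qed
  then have "(\<Inter>N. \<Union>s. {w. N \<le> s \<and> lr f0 f1 j w s \<ge> b}) \<in> sets Omega_inf"
    by (intro sets.countable_INT sets.countable_nat_UN) (auto intro: determined_in_Omega_inf)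
  also have "(\<Inter>N. \<Union>s. {w. N \<le> s \<and> lr f0 f1 j w s \<ge> b}) =
      {w. \<exists>\<^sub>F s in sequentially. lr f0 f1 j w s \<ge> b}"
    by (auto simp: frequently_sequentially)
  finally show ?thesis .
qed

section \<open>Approximation by open sets of sequences\<close>

text \<open>The open sets of the product topology on \<open>\<Omega>\<^sup>\<infinity>\<close>: unions of cylinders.\<close>

definition cyl_open :: "(nat \<Rightarrow> bool) set \<Rightarrow> bool" where
  "cyl_open U \<longleftrightarrow> (\<exists>L. U = {w. \<exists>s. seq_prefix w s \<in> L})"

lemma determined_seq_prefix_in: "determined s {w. seq_prefix w s \<in> L}"
  unfolding determined_def by (simp add: seq_prefix_eq_iff[symmetric])

lemma cyl_open_in_Omega_inf: "cyl_open U \<Longrightarrow> U \<in> sets Omega_inf"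
  unfolding cyl_open_def by (auto intro: eventually_determined_in_Omega_inf[OF determined_seq_prefix_in])

lemma cyl_open_if_determined:
  assumes "determined s F" shows "cyl_open F"
proof -
  have "F = {w. \<exists>s'. seq_prefix w s' \<in> (\<lambda>w. seq_prefix w s) ` F}"
  proof (intro set_eqI iffI)
    fix w assume "w \<in> {w. \<exists>s'. seq_prefix w s' \<in> (\<lambda>w. seq_prefix w s) ` F}"
    then obtain s' u where u: "seq_prefix w s' = seq_prefix u s" "u \<in> F" by auto
    then have "s' = s" by (metis length_seq_prefix)
    then have "\<forall>n<s. w n = u n" using u(1) by (simp add: seq_prefix_eq_iff)
    then show "w \<in> F" using assms u(2) unfolding determined_def by blast
  qed blast
  then show ?thesis unfolding cyl_open_def by blast
qed

lemma cyl_open_UN: "(\<And>n::nat. cyl_open (U n)) \<Longrightarrow> cyl_open (\<Union>n. U n)"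
proof -
  assume "\<And>n. cyl_open (U n)"
  then obtain L where L: "\<And>n. U n = {w. \<exists>s. seq_prefix w s \<in> L n}"
    unfolding cyl_open_def by metis
  have "(\<Union>n. U n) = {w. \<exists>s. seq_prefix w s \<in> (\<Union>n. L n)}" by (auto simp: L)
  then show ?thesis unfolding cyl_open_def by blast
qed

lemma cyl_open_Int:
  assumes "cyl_open U" "cyl_open V" shows "cyl_open (U \<inter> V)"
proof -
  obtain L1 L2 where U: "U = {w. \<exists>s. seq_prefix w s \<in> L1}" and V: "V = {w. \<exists>s. seq_prefix w s \<in> L2}"
    using assms by (auto simp: cyl_open_def)
  let ?L = "{l. \<exists>s1 s2. s1 \<le> length l \<and> s2 \<le> length l \<and> take s1 l \<in> L1 \<and> take s2 l \<in> L2}"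
  have "U \<inter> V = {w. \<exists>s. seq_prefix w s \<in> ?L}"
  proof (intro set_eqI iffI)
    fix w assume "w \<in> U \<inter> V"
    then obtain s1 s2 where "seq_prefix w s1 \<in> L1" "seq_prefix w s2 \<in> L2" by (auto simp: U V)
    then have "seq_prefix w (max s1 s2) \<in> ?L"
      by (rule_tac CollectI, rule_tac exI[of _ s1], rule_tac exI[of _ s2]) (simp add: take_seq_prefix)
    then show "w \<in> {w. \<exists>s. seq_prefix w s \<in> ?L}" by blast
  next
    fix w assume "w \<in> {w. \<exists>s. seq_prefix w s \<in> ?L}"
    then show "w \<in> U \<inter> V"
      by (auto simp: U V take_seq_prefix min_absorb1)
  qed
  then show ?thesis unfolding cyl_open_def by blast
qed

lemma cyl_open_INT_lessThan:
  fixes N :: nat shows "(\<And>n. n < N \<Longrightarrow> cyl_open (V n)) \<Longrightarrow> cyl_open (\<Inter>n<N. V n)"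
proof (induction N)
  case 0
  have "UNIV = {w :: nat \<Rightarrow> bool. \<exists>s. seq_prefix w s \<in> {[]}}"
    using seq_prefix_0 by blast
  then show ?case by (auto simp: cyl_open_def)
next
  case (Suc N)
  then show ?case by (simp add: lessThan_Suc Int_commute cyl_open_Int)
qed

definition cyl_regular :: "(nat \<Rightarrow> bool) measure \<Rightarrow> (nat \<Rightarrow> bool) set \<Rightarrow> bool" where
  "cyl_regular P S \<longleftrightarrow>
     (\<forall>d>0. \<exists>U V. cyl_open U \<and> cyl_open V \<and> S \<subseteq> U \<and> - S \<subseteq> V \<and> measure P (U \<inter> V) < d)"

lemma cyl_regular_Compl:
  assumes "cyl_regular P S" shows "cyl_regular P (- S)"
  unfolding cyl_regular_def
proof (intro allI impI)
  fix d :: real assume "d > 0"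
  then obtain U V where "cyl_open U" "cyl_open V" "S \<subseteq> U" "- S \<subseteq> V" "measure P (V \<inter> U) < d"
    using assms unfolding cyl_regular_def by (auto simp: Int_commute)
  then show "\<exists>U V. cyl_open U \<and> cyl_open V \<and> - S \<subseteq> U \<and> - (- S) \<subseteq> V \<and> measure P (U \<inter> V) < d"
    by blast
qed

lemma cyl_regular_if_determined:
  assumes "determined s S" shows "cyl_regular P S"
  unfolding cyl_regular_def
proof (intro allI impI)
  fix d :: real assume "d > 0"
  have "cyl_open S" "cyl_open (- S)"
    using assms by (auto intro: cyl_open_if_determined determined_Compl)
  moreover have "measure P (S \<inter> - S) < d" using \<open>d > 0\<close> by simp
  ultimately show "\<exists>U V. cyl_open U \<and> cyl_open V \<and> S \<subseteq> U \<and> - S \<subseteq> V \<and> measure P (U \<inter> V) < d"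
    by blast
qed

lemma measure_UN_shift_less:
  fixes A :: "nat \<Rightarrow> 'a set"
  assumes "finite_measure P" "range A \<subseteq> sets P" "disjoint_family A" "d > 0"
  shows "\<exists>N. measure P (\<Union>i. A (i + N)) < d"
proof -
  interpret finite_measure P by fact
  have sums: "(\<lambda>n. measure P (A n)) sums measure P (\<Union>n. A n)"
    using assms by (intro finite_measure_UNION) auto
  obtain N where N: "norm (\<Sum>i. measure P (A (i + N))) < d"
    using suminf_exist_split[OF assms(4) sums_summable[OF sums]] by blast
  have "disjoint_family (\<lambda>i. A (i + N))"
  proof (unfold disjoint_family_on_def, intro ballI impI)
    fix m n :: nat assume "m \<noteq> n"
    then show "A (m + N) \<inter> A (n + N) = {}" using assms(3) by (simp add: disjoint_family_on_def)
  qed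
  then have "(\<lambda>i. measure P (A (i + N))) sums measure P (\<Union>i. A (i + N))"
    using assms(2) by (intro finite_measure_UNION) auto
  then show ?thesis using N by (auto simp: sums_iff)
qed

lemma measure_UN_le_geometric:
  assumes "finite_measure P" "range B \<subseteq> sets P" "\<And>n::nat. measure P (B n) < d / 4 * (1/2) ^ n"
  shows "measure P (\<Union>n. B n) \<le> d / 2"
proof -
  interpret finite_measure P by fact
  have geom: "summable (\<lambda>n. d / 4 * (1/2::real) ^ n)"
    by (intro summable_mult summable_geometric) simp
  have summable: "summable (\<lambda>n. measure P (B n))"
    by (rule summable_comparison_test'[OF geom]) (use assms(3) in \<open>auto intro: less_imp_le\<close>)
  have "measure P (\<Union>n. B n) \<le> (\<Sum>n. measure P (B n))"
    using assms(2) summable by (intro finite_measure_subadditive_countably) auto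
  also have "\<dots> \<le> (\<Sum>n. d / 4 * (1/2::real) ^ n)"
    using assms(3) by (intro suminf_le geom summable) (auto intro: less_imp_le)
  also have "\<dots> = d / 4 * (\<Sum>n. (1/2::real) ^ n)"
    by (rule suminf_mult) (rule summable_geometric, simp)
  also have "\<dots> = d / 2"
    by (simp add: suminf_geometric)
  finally show ?thesis .
qed

lemma UN_Int_INT_subset:
  fixes N :: nat
  assumes "\<And>n. - A n \<subseteq> V n"
  shows "(\<Union>n. U n) \<inter> (\<Inter>n<N. V n) \<subseteq> (\<Union>n. U n \<inter> V n) \<union> (\<Union>i. A (i + N))"
proof
  fix w assume w: "w \<in> (\<Union>n. U n) \<inter> (\<Inter>n<N. V n)"
  then obtain n where n: "w \<in> U n" by blast
  show "w \<in> (\<Union>n. U n \<inter> V n) \<union> (\<Union>i. A (i + N))"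
  proof (cases "n < N \<or> w \<notin> A n")
    case True
    then have "w \<in> V n" using w assms by blast
    then show ?thesis using n by blast
  next
    case False
    then have "w \<in> A ((n - N) + N)" by simp
    then show ?thesis by blast
  qed
qed

text \<open>A disjoint union is covered, up to a small error, by the union of the approximating open sets
  of its members and the intersection of the co-approximating open sets of its first \<open>N\<close> members.\<close>

lemma cyl_regular_disjoint_UN:
  fixes A :: "nat \<Rightarrow> (nat \<Rightarrow> bool) set"
  assumes P: "prob_space P" "sets P = sets Omega_inf"
    and A: "range A \<subseteq> sets Omega_inf" "disjoint_family A" "\<And>n. cyl_regular P (A n)"
  shows "cyl_regular P (\<Union>n. A n)"
  unfolding cyl_regular_def
proof (intro allI impI)
  interpret prob_space P by fact
  fix d :: real assume d: "d > 0"
  have "range A \<subseteq> sets P" "d / 2 > 0" using A(1) P(2) d by auto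
  then obtain N where small_tail: "measure P (\<Union>i. A (i + N)) < d / 2"
    using measure_UN_shift_less[OF finite_measure_axioms _ A(2)] by blast
  have "\<forall>n. \<exists>U V. cyl_open U \<and> cyl_open V \<and> A n \<subseteq> U \<and> - A n \<subseteq> V \<and>
      measure P (U \<inter> V) < d / 4 * (1/2) ^ n"
  proof
    fix n
    have "0 < d / 4 * (1/2::real) ^ n" using d by simp
    then show "\<exists>U V. cyl_open U \<and> cyl_open V \<and> A n \<subseteq> U \<and> - A n \<subseteq> V \<and>
        measure P (U \<inter> V) < d / 4 * (1/2) ^ n"
      using A(3)[of n] unfolding cyl_regular_def by blast
  qed
  then obtain U V where UV: "\<And>n. cyl_open (U n)" "\<And>n. cyl_open (V n)" "\<And>n. A n \<subseteq> U n" "\<And>n. - A n \<subseteq> V n"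
    and small: "\<And>n. measure P (U n \<inter> V n) < d / 4 * (1/2) ^ n"
    by metis
  have UV_sets: "U n \<inter> V n \<in> sets P" for n
    using UV(1,2) cyl_open_in_Omega_inf P(2) by auto
  have small_UV: "measure P (\<Union>n. U n \<inter> V n) \<le> d / 2"
    using UV_sets small by (intro measure_UN_le_geometric[OF finite_measure_axioms]) auto
  define U' where "U' = (\<Union>n. U n)"
  define V' where "V' = (\<Inter>n<N. V n)"
  have "U' \<inter> V' \<subseteq> (\<Union>n. U n \<inter> V n) \<union> (\<Union>i. A (i + N))"
    unfolding U'_def V'_def by (rule UN_Int_INT_subset) (rule UV(4))
  then have "measure P (U' \<inter> V') \<le> measure P ((\<Union>n. U n \<inter> V n) \<union> (\<Union>i. A (i + N)))"
    using UV_sets A P by (intro finite_measure_mono) auto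
  also have "\<dots> \<le> measure P (\<Union>n. U n \<inter> V n) + measure P (\<Union>i. A (i + N))"
    using UV_sets A P by (intro measure_Un_le) auto
  finally have "measure P (U' \<inter> V') < d"
    using small_UV small_tail d by linarith
  moreover have "cyl_open U'" "cyl_open V'"
    unfolding U'_def V'_def using UV(1,2) by (auto intro: cyl_open_UN cyl_open_INT_lessThan)
  moreover have "(\<Union>n. A n) \<subseteq> U'"
    using UV(3) by (auto simp: U'_def)
  moreover have "- (\<Union>n. A n) \<subseteq> V'"
    unfolding V'_def by (intro subsetI INT_I) (use UV(4) in blast)
  ultimately show "\<exists>U V. cyl_open U \<and> cyl_open V \<and> (\<Union>n. A n) \<subseteq> U \<and> - (\<Union>n. A n) \<subseteq> V \<and> measure P (U \<inter> V) < d"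
    by blast
qed

lemma cyl_regular:
  assumes P: "prob_space P" "sets P = sets Omega_inf" and S: "S \<in> sets Omega_inf"
  shows "cyl_regular P S"
proof -
  have "prod_algebra UNIV (\<lambda>_::nat. count_space (UNIV::bool set)) \<subseteq> Pow UNIV" by simp
  from Int_stable_prod_algebra this S[unfolded sets_Omega_inf] show ?thesis
  proof (induction rule: sigma_sets_induct_disjoint)
    case (basic A)
    then show ?case by (metis determined_if_prod_algebra cyl_regular_if_determined)
  next
    case empty
    show ?case by (rule cyl_regular_if_determined[of 0]) (simp add: determined_def)
  next
    case (compl A)
    then show ?case by (simp add: Compl_eq_Diff_UNIV[symmetric] cyl_regular_Compl)
  next
    case (union A)
    then show ?case using P by (intro cyl_regular_disjoint_UN) (auto simp: sets_Omega_inf)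
  qed
qed

lemma null_set_cyl_open_cover:
  assumes P: "prob_space P" "sets P = sets Omega_inf" and S: "S \<in> sets Omega_inf"
    and "measure P S = 0" and "d > 0"
  shows "\<exists>U. cyl_open U \<and> S \<subseteq> U \<and> measure P U < d"
proof -
  interpret prob_space P by fact
  obtain U V where UV: "cyl_open U" "cyl_open V" "S \<subseteq> U" "- S \<subseteq> V" "measure P (U \<inter> V) < d"
    using cyl_regular[OF P S] \<open>d > 0\<close> unfolding cyl_regular_def by blast
  have "measure P U \<le> measure P (S \<union> (U \<inter> V))"
    using UV cyl_open_in_Omega_inf P(2) S by (intro finite_measure_mono) auto
  also have "\<dots> \<le> measure P S + measure P (U \<inter> V)"
    using UV cyl_open_in_Omega_inf P(2) S by (intro measure_Un_le) auto
  finally show ?thesis using UV assms(4) by auto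
qed

section \<open>Density points and singularity\<close>

lemma density_point_cyl:
  assumes P: "prob_space P" "sets P = sets Omega_inf"
    and B: "B \<in> sets Omega_inf" "measure P B > 0" and e: "0 < e" "e < 1"
  shows "\<exists>w\<in>B. \<exists>t. measure P (B \<inter> cyl w t) > (1 - e) * measure P (cyl w t)"
proof (rule ccontr)
  interpret prob_space P by fact
  assume "\<not> ?thesis"
  then have sparse_at: "measure P (B \<inter> cyl u t) \<le> (1 - e) * measure P (cyl u t)" if "u \<in> B" for u t
    using that by (auto simp: not_less)
  have "measure P (B \<inter> cyl w t) \<le> (1 - e) * measure P (cyl w t)" for w t
  proof (cases "B \<inter> cyl w t = {}")
    case False
    then obtain u where "u \<in> B" "u \<in> cyl w t" by blast
    then show ?thesis using sparse_at[of u t] cyl_cong[of u w t] by simp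
  qed (use e in simp)
  then have sparse: "1 * measure P (B \<inter> cyl w t) \<le> (1 - e) * measure P (UNIV \<inter> cyl w t)" for w t
    by simp
  define d where "d = e * measure P B / 2"
  have d: "d > 0" using e B by (simp add: d_def)
  obtain U V where UV: "cyl_open U" "cyl_open V" "B \<subseteq> U" "- B \<subseteq> V" "measure P (U \<inter> V) < d"
    using cyl_regular[OF P B(1)] d unfolding cyl_regular_def by blast
  obtain L where L: "U = {w. \<exists>s. seq_prefix w s \<in> L}" using UV(1) by (auto simp: cyl_open_def)
  have "1 * measure P (B \<inter> U) \<le> (1 - e) * measure P (UNIV \<inter> U)"
    unfolding L using P B(1) sparse finite_measure_axioms
    by (intro measure_stopping_le determined_seq_prefix_in) auto
  then have "measure P B \<le> (1 - e) * measure P U" using UV(3) by (simp add: Int_absorb2)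
  also have "\<dots> \<le> (1 - e) * (measure P B + measure P (U \<inter> V))"
  proof -
    have "measure P U \<le> measure P (B \<union> (U \<inter> V))"
      using UV B P cyl_open_in_Omega_inf by (intro finite_measure_mono) auto
    also have "\<dots> \<le> measure P B + measure P (U \<inter> V)"
      using UV B P cyl_open_in_Omega_inf by (intro measure_Un_le) auto
    finally show ?thesis using e by (intro mult_left_mono) auto
  qed
  also have "\<dots> \<le> (1 - e) * (measure P B + d)"
    using UV(5) e by (intro mult_left_mono) auto
  finally have "e * measure P B \<le> (1 - e) * d"
    by (simp add: algebra_simps)
  also have "\<dots> < d" using e d by simp
  finally show False using e B by (simp add: d_def)
qed

text \<open>Stopping at the first time the likelihood ratio reaches \<open>b\<close> inside a thin cylinder-open
  cover of \<open>S\<close> shows that \<open>P\<^sub>1\<^sub>-\<^sub>j \<ge> b \<cdot> P\<^sub>j\<close> on the sequences where it is reached.\<close>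

lemma measure_zero_if_frequently_lr_ge:
  assumes S: "S \<in> sets Omega_inf" "measure (induced f0 f1 (1 - j)) S = 0" and b: "b > 0"
    and freq: "\<And>w. w \<in> S \<Longrightarrow> lr_pos f0 f1 j w \<and> (\<exists>\<^sub>F s in sequentially. lr f0 f1 j w s \<ge> b)"
  shows "measure (induced f0 f1 j) S = 0"
proof (rule ccontr)
  let ?P = "induced f0 f1 j" and ?Q = "induced f0 f1 (1 - j)"
  assume "measure ?P S \<noteq> 0"
  then have pos: "measure ?P S > 0" using measure_nonneg[of ?P S] by linarith
  have "b * measure ?P S > 0" using b pos by simp
  then obtain U where U: "cyl_open U" "S \<subseteq> U" "measure ?Q U < b * measure ?P S"
    using null_set_cyl_open_cover[OF prob_space_induced sets_induced S] by blast
  obtain L where L: "U = {w. \<exists>s. seq_prefix w s \<in> L}" using U(1) by (auto simp: cyl_open_def)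
  define Q where "Q w s \<longleftrightarrow> (\<exists>s'\<le>s. seq_prefix w s' \<in> L) \<and> positive_upto f0 f1 j w s \<and> lr f0 f1 j w s \<ge> b"
    for w s
  have Q: "determined s {w. Q w s}" for s
  proof (rule determined_Collect)
    fix v w :: "nat \<Rightarrow> bool" assume vw: "\<forall>n<s. v n = w n"
    then have "seq_prefix v s' = seq_prefix w s'" if "s' \<le> s" for s'
      using that by (simp add: seq_prefix_eq_iff)
    then have "(\<exists>s'\<le>s. seq_prefix v s' \<in> L) \<longleftrightarrow> (\<exists>s'\<le>s. seq_prefix w s' \<in> L)" by auto
    then show "Q v s \<longleftrightarrow> Q w s"
      unfolding Q_def positive_upto_cong[OF vw] lr_cong[OF vw] by (simp only:)
  qed
  have "S \<subseteq> {w. \<exists>s. Q w s}"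
  proof
    fix w assume w: "w \<in> S"
    then obtain s' where s': "seq_prefix w s' \<in> L" using U(2) L by blast
    have "\<exists>\<^sub>F s in sequentially. lr f0 f1 j w s \<ge> b" using freq[OF w] by blast
    then obtain s where s: "s \<ge> s'" "lr f0 f1 j w s \<ge> b"
      unfolding frequently_sequentially by blast
    have "Q w s"
      unfolding Q_def using s s' positive_upto_if_lr_pos freq[OF w] by auto
    then show "w \<in> {w. \<exists>s. Q w s}" by blast
  qed
  then have "b * measure ?P S \<le> b * measure ?P {w. \<exists>s. Q w s}"
    using b eventually_determined_in_Omega_inf[OF Q] by (intro mult_left_mono measure_induced_mono) auto
  also have "\<dots> \<le> measure ?Q {w. \<exists>s. Q w s}"
    by (rule lr_ge_imp_measure_le[OF Q]) (simp add: Q_def)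
  also have "\<dots> \<le> measure ?Q U"
    using cyl_open_in_Omega_inf[OF U(1)] by (intro measure_induced_mono) (auto simp: L Q_def)
  finally show False using U(3) by linarith
qed

section \<open>Restarting a pair of forecasters after a finite history\<close>

text \<open>With \<open>h = h\<^sup>t(w, f\<^sub>0, f\<^sub>1)\<close>, the restarted pair induces
  the measures \<open>P\<^sub>i\<^sup>f\<close> conditioned on the cylinder \<open>w\<^sup>t\<close>, and its play paths have the same tail.\<close>

definition restart :: "(nat \<Rightarrow> bool) \<Rightarrow> nat \<Rightarrow> hist_elem list \<Rightarrow> fstrat \<Rightarrow> fstrat" where
  "restart w t h f = (\<lambda>h'. if length h' < t then return_pmf (w (length h')) else f (h @ drop t h'))"

lemma sel_restart: "sel (restart w t h f0) (restart w t h f1) i = restart w t h (sel f0 f1 i)"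
  by (simp add: sel_def)

lemma restart_before: "n < t \<Longrightarrow> restart w t h f (hist v g0 g1 n) = return_pmf (w n)"
  by (simp add: restart_def)

lemma restart_after:
  fixes f0 f1 :: fstrat
  assumes v: "v \<in> cyl w t" and n: "t \<le> n"
  defines "h \<equiv> hist w f0 f1 t"
  shows "restart w t h f (hist v (restart w t h f0) (restart w t h f1) n) = f (hist v f0 f1 n)"
proof -
  let ?g0 = "restart w t h f0" and ?g1 = "restart w t h f1"
  have "hist v f0 f1 t = h" unfolding h_def using v by (intro hist_cong) (auto simp: cyl_def)
  then have split: "hist v f0 f1 (t + m) = h @ drop t (hist v f0 f1 (t + m))" for m
    by (metis append_take_drop_id take_hist)
  have step: "restart w t h f (hist v ?g0 ?g1 (t + m)) = f (h @ drop t (hist v ?g0 ?g1 (t + m)))"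
    for f m by (simp add: restart_def)
  have "drop t (hist v ?g0 ?g1 (t + m)) = drop t (hist v f0 f1 (t + m))" for m
  proof (induction m)
    case (Suc m)
    then show ?case by (simp add: step split[symmetric])
  qed simp
  moreover obtain m where "n = t + m" using n le_Suc_ex by blast
  ultimately show ?thesis by (simp add: step split[symmetric])
qed

lemma tail_test_restart:
  fixes f0 f1 :: fstrat
  assumes tail: "tail_test T" and t: "t \<ge> 1" and v: "v \<in> cyl w t"
    and pos: "positive_upto f0 f1 0 w t" "positive_upto f0 f1 1 w t"
  defines "h \<equiv> hist w f0 f1 t"
  shows "T v (restart w t h f0) (restart w t h f1) = T v f0 f1"
proof -
  let ?g0 = "restart w t h f0" and ?g1 = "restart w t h f1"
  have vw: "\<forall>n<t. v n = w n" using v by (simp add: cyl_def)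
  have "eventually_coincide v ?g0 ?g1 v f0 f1"
    unfolding eventually_coincide_def
  proof (intro exI[of _ "Suc t"] conjI allI impI ballI)
    fix k assume "Suc t - 1 \<le> k"
    then show "path v ?g0 ?g1 k = path v f0 f1 k"
      unfolding path_def using restart_after[OF v] h_def by simp
  next
    fix k i assume k: "k < Suc t - 1" and i: "i \<in> {0::nat, 1}"
    then show "0 < pmf (sel ?g0 ?g1 i (hist v ?g0 ?g1 k)) (v k)"
      using vw by (simp add: sel_restart restart_before pmf_return)
    have "hist v f0 f1 k = hist w f0 f1 k" using vw k by (intro hist_cong) auto
    then show "0 < pmf (sel f0 f1 i (hist v f0 f1 k)) (v k)"
      using i pos vw k by (auto simp: positive_upto_def)
  qed (use t in simp)
  then show ?thesis using tail unfolding tail_test_def by blast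
qed

lemma measure_induced_restart_cyl:
  assumes c: "measure (induced f0 f1 k) (cyl w t) > 0"
  defines "h \<equiv> hist w f0 f1 t"
  shows "measure (induced (restart w t h f0) (restart w t h f1) k) (cyl u s) * measure (induced f0 f1 k) (cyl w t) =
     measure (induced f0 f1 k) (cyl w t \<inter> cyl u s)"
proof -
  let ?g0 = "restart w t h f0" and ?g1 = "restart w t h f1"
  define G where "G n = pmf (sel ?g0 ?g1 k (hist u ?g0 ?g1 n)) (u n)" for n
  define F where "F n = pmf (sel f0 f1 k (hist u f0 f1 n)) (u n)" for n
  have G: "measure (induced ?g0 ?g1 k) (cyl u s) = (\<Prod>n<s. G n)"
    by (simp add: measure_induced_cyl G_def)
  have G_before: "G n = (if u n = w n then 1 else 0)" if "n < t" for n
    using that by (simp add: G_def sel_restart restart_before pmf_return)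
  show ?thesis
  proof (cases "\<forall>n<min s t. u n = w n")
    case False
    then obtain n where n: "n < s" "n < t" "u n \<noteq> w n" by auto
    then have "(\<Prod>n<s. G n) = 0" using G_before[of n] by (intro prod_zero) auto
    moreover have "cyl w t \<inter> cyl u s = {}" using n by (auto simp: cyl_def)
    ultimately show ?thesis by (simp add: G)
  next
    case agree: True
    show ?thesis
    proof (cases "s \<le> t")
      case True
      then have "(\<Prod>n<s. G n) = 1" using agree G_before by (intro prod.neutral) auto
      moreover have "cyl w t \<inter> cyl u s = cyl w t" using agree True by (auto simp: cyl_def)
      ultimately show ?thesis by (simp add: G)
    next
      case False
      then have ts: "t \<le> s" and u: "u \<in> cyl w t" using agree by (auto simp: cyl_def)
      have G_after: "G n = F n" if "t \<le> n" for n
        using restart_after[OF u that, of f0 f1] by (simp add: G_def F_def sel_restart h_def)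
      have "(\<Prod>n<s. G n) = (\<Prod>n<t. G n) * (\<Prod>n\<in>{t..<s}. G n)"
        using prod.atLeastLessThan_concat[of 0 t s G] ts by (simp add: atLeast0LessThan)
      also have "\<dots> = (\<Prod>n\<in>{t..<s}. F n)"
        using agree ts G_before G_after by simp
      finally have "(\<Prod>n<s. G n) * (\<Prod>n<t. F n) = (\<Prod>n<s. F n)"
        using prod.atLeastLessThan_concat[of 0 t s F] ts by (simp add: atLeast0LessThan mult.commute)
      moreover have "measure (induced f0 f1 k) (cyl w t) = (\<Prod>n<t. F n)"
        by (simp add: cyl_cong[OF u, symmetric] measure_induced_cyl F_def)
      moreover have "measure (induced f0 f1 k) (cyl u s) = (\<Prod>n<s. F n)"
        by (simp add: measure_induced_cyl F_def)
      moreover have "cyl w t \<inter> cyl u s = cyl u s"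
        using agree ts by (auto simp: cyl_def)
      ultimately show ?thesis by (simp only: G)
    qed
  qed
qed

lemma measure_induced_restart:
  assumes c: "measure (induced f0 f1 k) (cyl w t) > 0" and A: "A \<in> sets Omega_inf"
  defines "h \<equiv> hist w f0 f1 t"
  shows "measure (induced (restart w t h f0) (restart w t h f1) k) A =
     measure (induced f0 f1 k) (cyl w t \<inter> A) / measure (induced f0 f1 k) (cyl w t)"
proof -
  let ?P = "induced f0 f1 k" and ?c = "measure (induced f0 f1 k) (cyl w t)"
  define M where "M = density ?P (\<lambda>v. ennreal (1 / ?c) * indicator (cyl w t) v)"
  have M: "emeasure M X = ennreal (measure ?P (cyl w t \<inter> X) / ?c)" if X: "X \<in> sets Omega_inf" for X
  proof -
    have [measurable]: "cyl w t \<in> sets ?P" "X \<in> sets ?P" using X by simp_all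
    have "emeasure M X = (\<integral>\<^sup>+ v. ennreal (1 / ?c) * indicator (cyl w t) v * indicator X v \<partial>?P)"
      unfolding M_def by (rule emeasure_density) measurable
    also have "\<dots> = (\<integral>\<^sup>+ v. ennreal (1 / ?c) * indicator (cyl w t \<inter> X) v \<partial>?P)"
      by (intro nn_integral_cong) (simp split: split_indicator)
    also have "\<dots> = ennreal (1 / ?c) * emeasure ?P (cyl w t \<inter> X)"
      using X by (intro nn_integral_cmult_indicator) auto
    finally show ?thesis
      using c finite_measure.emeasure_eq_measure[OF finite_measure_induced]
      by (simp add: ennreal_mult'[symmetric] divide_inverse mult.commute)
  qed
  have "finite_measure M"
    by (rule finite_measureI) (simp add: M_def M[OF UNIV_in_Omega_inf, unfolded M_def])
  then have "induced (restart w t h f0) (restart w t h f1) k = M"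
  proof (rule induced_eqI_cyl)
    show "sets M = sets Omega_inf" by (simp add: M_def)
    fix u s
    have "measure (induced (restart w t h f0) (restart w t h f1) k) (cyl u s) =
        measure ?P (cyl w t \<inter> cyl u s) / ?c"
      using measure_induced_restart_cyl[OF c, of u s] c by (simp add: h_def field_simps)
    then show "emeasure M (cyl u s) =
        ennreal (\<Prod>n<s. pmf (sel (restart w t h f0) (restart w t h f1) k
          (hist u (restart w t h f0) (restart w t h f1) n)) (u n))"
      by (simp add: M measure_induced_cyl)
  qed
  then show ?thesis using M[OF A] c by (simp add: measure_def)
qed

lemma manipulation:
  assumes ct: "comparison_test T" and tail: "tail_test T"
    and B: "B \<in> sets Omega_inf" "measure (induced f0 f1 k) B > 0"
    and B_sub: "\<And>w. w \<in> B \<Longrightarrow> T w f0 f1 = x \<and> lr_pos f0 f1 0 w \<and> lr_pos f0 f1 1 w"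
    and e: "0 < e" "e < 1"
  shows "\<exists>g0 g1. measure (induced g0 g1 k) {w. T w g0 g1 = x} > 1 - e"
proof -
  let ?P = "induced f0 f1 k"
  obtain w t where w: "w \<in> B" and dense: "measure ?P (B \<inter> cyl w t) > (1 - e) * measure ?P (cyl w t)"
    using density_point_cyl[OF prob_space_induced sets_induced B e] by blast
  have T_sets: "{v. T v g0 g1 = x} \<in> sets Omega_inf" for g0 g1 by (rule measurable_test_set[OF ct])
  have B_T: "B \<inter> cyl w t \<subseteq> cyl w t \<inter> {v. T v f0 f1 = x}" using B_sub by blast
  have c: "measure ?P (cyl w t) > 0"
  proof -
    have "measure ?P (B \<inter> cyl w t) \<le> measure ?P (cyl w t)" by (intro measure_induced_mono) auto
    moreover have "(1 - e) * measure ?P (cyl w t) \<ge> 0" using e by simp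
    ultimately show ?thesis using dense by linarith
  qed
  show ?thesis
  proof (cases "t = 0")
    case True
    then have "cyl w t = UNIV" by (simp add: cyl_def)
    then have "1 - e < measure ?P B"
      using dense prob_space.prob_space[OF prob_space_induced] by simp
    also have "\<dots> \<le> measure ?P {v. T v f0 f1 = x}"
      using B_sub T_sets by (intro measure_induced_mono) auto
    finally show ?thesis by blast
  next
    case False
    let ?h = "hist w f0 f1 t"
    let ?g0 = "restart w t ?h f0" and ?g1 = "restart w t ?h f1"
    have "cyl w t \<inter> {v. T v ?g0 ?g1 = x} = cyl w t \<inter> {v. T v f0 f1 = x}"
      using tail_test_restart[OF tail _ _ positive_upto_if_lr_pos positive_upto_if_lr_pos] B_sub[OF w] False
      by auto
    then have restart_T: "measure (induced ?g0 ?g1 k) {v. T v ?g0 ?g1 = x} =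
        measure ?P (cyl w t \<inter> {v. T v f0 f1 = x}) / measure ?P (cyl w t)"
      using measure_induced_restart[OF c T_sets] by simp
    have "1 - e < measure ?P (B \<inter> cyl w t) / measure ?P (cyl w t)"
      using dense c by (simp add: pos_less_divide_eq)
    also have "\<dots> \<le> measure ?P (cyl w t \<inter> {v. T v f0 f1 = x}) / measure ?P (cyl w t)"
      using c T_sets by (intro divide_right_mono measure_induced_mono[OF B_T]) auto
    finally show ?thesis unfolding restart_T[symmetric] by blast
  qed
qed

section \<open>Almost sure agreement with the derivative test\<close>

lemma D_exists_zero_iff:
  "D_exists_zero f0 f1 j w \<longleftrightarrow> lr_pos f0 f1 j w \<and> (\<lambda>t. lr f0 f1 j w t) \<longlonglongrightarrow> 0"
proof (cases "lr_pos f0 f1 j w")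
  case True
  let ?X = "\<lambda>t. ereal (lr f0 f1 j w t)"
  have "D_exists_zero f0 f1 j w \<longleftrightarrow> limsup ?X = 0 \<and> liminf ?X = 0"
    using True by (auto simp: D_exists_zero_def upper_D_def lower_D_def)
  also have "\<dots> \<longleftrightarrow> ?X \<longlonglongrightarrow> ereal 0"
    using tendsto_iff_Liminf_eq_Limsup[of sequentially ?X "ereal 0"] by (auto simp: zero_ereal_def)
  also have "\<dots> \<longleftrightarrow> (\<lambda>t. lr f0 f1 j w t) \<longlonglongrightarrow> 0" by (rule lim_ereal)
  finally show ?thesis using True by simp
qed (simp add: D_exists_zero_def upper_D_def lower_D_def)

lemma lr_mult_lr:
  assumes "lr_pos f0 f1 0 w" "lr_pos f0 f1 1 w"
  shows "lr f0 f1 0 w t * lr f0 f1 1 w t = 1"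
proof -
  let ?p = "\<lambda>i n. pmf (sel f0 f1 i (hist w f0 f1 n)) (w n)"
  have "lr f0 f1 0 w t * lr f0 f1 1 w t = (\<Prod>n<t. ?p 1 n / ?p 0 n * (?p 0 n / ?p 1 n))"
    unfolding lr_def by (simp only: diff_zero diff_self_eq_0 prod.distrib)
  also have "\<dots> = 1"
  proof (intro prod.neutral ballI)
    fix n
    have "?p 0 n > 0" "?p 1 n > 0" using assms by (auto simp: lr_pos_def)
    then show "?p 1 n / ?p 0 n * (?p 0 n / ?p 1 n) = 1" by simp
  qed
  finally show ?thesis .
qed

lemma not_D_exists_zero_both: "\<not> (D_exists_zero f0 f1 0 w \<and> D_exists_zero f0 f1 1 w)"
proof
  assume "D_exists_zero f0 f1 0 w \<and> D_exists_zero f0 f1 1 w"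
  then have pos: "lr_pos f0 f1 0 w" "lr_pos f0 f1 1 w"
    and lim: "(\<lambda>t. lr f0 f1 0 w t) \<longlonglongrightarrow> 0" "(\<lambda>t. lr f0 f1 1 w t) \<longlonglongrightarrow> 0"
    unfolding D_exists_zero_iff by blast+
  have "(\<lambda>t. lr f0 f1 0 w t * lr f0 f1 1 w t) \<longlonglongrightarrow> 0 * 0"
    by (rule tendsto_mult[OF lim])
  then show False using lr_mult_lr[OF pos] LIMSEQ_const_iff[of "1::real" 0] by simp
qed

lemma lr_tendsto_zero_if_not_lr_pos:
  assumes "\<not> lr_pos f0 f1 (1 - j) w"
  shows "(\<lambda>t. lr f0 f1 j w t) \<longlonglongrightarrow> 0"
proof (rule tendsto_eventually)
  obtain n where n: "pmf (sel f0 f1 (1 - j) (hist w f0 f1 n)) (w n) = 0"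
    using assms pmf_nonneg by (auto simp: lr_pos_def not_less intro: antisym)
  show "eventually (\<lambda>t. lr f0 f1 j w t = 0) sequentially"
    unfolding eventually_sequentially lr_def using n by (auto intro!: exI[of _ "Suc n"] prod_zero)
qed

lemma frequently_lr_ge_if_not_tendsto_zero:
  assumes "\<not> (\<lambda>t. lr f0 f1 j w t) \<longlonglongrightarrow> 0"
  shows "\<exists>m. \<exists>\<^sub>F t in sequentially. lr f0 f1 j w t \<ge> 1 / real (Suc m)"
proof -
  have "\<exists>b>0. \<not> eventually (\<lambda>t. lr f0 f1 j w t < b) sequentially"
  proof (rule ccontr)
    assume "\<not> ?thesis"
    then have "(\<lambda>t. lr f0 f1 j w t) \<longlonglongrightarrow> 0"
    proof (intro order_tendstoI)
      fix a :: real assume "a < 0"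
      then have "\<forall>t. a < lr f0 f1 j w t" using lr_nonneg[of f0 f1 j w] by (metis less_le_trans)
      then show "eventually (\<lambda>t. a < lr f0 f1 j w t) sequentially" by (rule always_eventually)
    qed blast
    then show False using assms by contradiction
  qed
  then obtain b where "b > 0" and freq: "\<exists>\<^sub>F t in sequentially. lr f0 f1 j w t \<ge> b"
    by (auto simp: not_eventually not_less)
  obtain m where m: "1 / real (Suc m) < b"
    using \<open>b > 0\<close> reals_Archimedean by (auto simp: inverse_eq_divide)
  have "\<exists>\<^sub>F t in sequentially. lr f0 f1 j w t \<ge> 1 / real (Suc m)"
    using freq by (rule frequently_elim1) (use m in linarith)
  then show ?thesis by blast
qed

lemma eq_deriv_test_if:
  assumes i: "i \<in> {0, 1}" and T: "T w f0 f1 \<in> {0, 1/2, 1}"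
    and pos: "lr_pos f0 f1 i w" and other: "\<not> D_exists_zero f0 f1 (1 - i) w"
    and D_i: "D_exists_zero f0 f1 i w \<Longrightarrow> T w f0 f1 = real i"
    and not_other: "lr_pos f0 f1 0 w \<and> lr_pos f0 f1 1 w \<Longrightarrow> T w f0 f1 \<noteq> real (1 - i)"
    and lr_i: "lr_pos f0 f1 0 w \<and> lr_pos f0 f1 1 w \<Longrightarrow> T w f0 f1 = real i \<Longrightarrow> (\<lambda>t. lr f0 f1 i w t) \<longlonglongrightarrow> 0"
  shows "T w f0 f1 = deriv_test w f0 f1"
proof (cases "D_exists_zero f0 f1 i w")
  case True
  then show ?thesis
    using D_i i not_D_exists_zero_both[of f0 f1 w] by (auto simp: deriv_test_def)
next
  case False
  then have half: "deriv_test w f0 f1 = 1/2"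
    using other i by (auto simp: deriv_test_def)
  have "lr_pos f0 f1 (1 - i) w"
    using False pos lr_tendsto_zero_if_not_lr_pos[of f0 f1 i w] by (auto simp: D_exists_zero_iff)
  then have both: "lr_pos f0 f1 0 w \<and> lr_pos f0 f1 1 w" using pos i by auto
  then have "T w f0 f1 \<noteq> real i"
    using lr_i False pos by (auto simp: D_exists_zero_iff)
  then show ?thesis using T i not_other[OF both] half by auto
qed

lemma AE_lr_pos: "AE w in induced f0 f1 j. lr_pos f0 f1 j w"
  by (rule AE_I'[OF null_sets_not_lr_pos]) auto

lemma AE_not_D_exists_zero_other:
  assumes "j \<in> {0, 1}"
  shows "AE w in induced f0 f1 j. \<not> D_exists_zero f0 f1 (1 - j) w"
proof (rule AE_I')
  show "lr_vanishing f0 f1 (1 - j) \<in> null_sets (induced f0 f1 j)"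
    using measure_lr_vanishing[of f0 f1 "1 - j"] assms lr_vanishing_in_Omega_inf
    by (auto simp: null_sets_induced_iff)
qed (auto simp: D_exists_zero_iff intro: lr_vanishingI)

lemma AE_D_exists_zero_imp_test:
  assumes ct: "comparison_test T" and reas: "reasonable T" and i: "i \<in> {0, 1}"
  shows "AE w in induced f0 f1 i. D_exists_zero f0 f1 i w \<longrightarrow> T w f0 f1 = real i"
proof -
  define Z where "Z = lr_vanishing f0 f1 i - {w. T w f0 f1 = real i}"
  have Z_sets: "Z \<in> sets Omega_inf"
    unfolding Z_def using lr_vanishing_in_Omega_inf measurable_test_set[OF ct] by blast
  have "measure (induced f0 f1 (1 - i)) Z \<le> measure (induced f0 f1 (1 - i)) (lr_vanishing f0 f1 i)"
    by (rule measure_induced_mono) (auto simp: Z_def lr_vanishing_in_Omega_inf)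
  then have Q_Z: "measure (induced f0 f1 (1 - i)) Z = 0"
    using measure_lr_vanishing[of f0 f1 i] measure_nonneg[of "induced f0 f1 (1 - i)" Z] by linarith
  have "measure (induced f0 f1 i) Z = 0"
  proof (rule ccontr)
    assume "measure (induced f0 f1 i) Z \<noteq> 0"
    then have "measure (induced f0 f1 i) Z > 0"
      using measure_nonneg[of _ Z] by (simp add: order_less_le)
    then have "measure (induced f0 f1 i) (Z \<inter> {w. T w f0 f1 = real i}) > 0"
      using reas i Z_sets Q_Z unfolding reasonable_def by blast
    moreover have "Z \<inter> {w. T w f0 f1 = real i} = {}" by (auto simp: Z_def)
    ultimately show False by simp
  qed
  then have "Z \<in> null_sets (induced f0 f1 i)" using Z_sets by (simp add: null_sets_induced_iff)
  then show ?thesis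
    by (rule AE_I') (auto simp: Z_def D_exists_zero_iff intro: lr_vanishingI)
qed

lemma null_if_not_manipulable:
  assumes ct: "comparison_test T" and tail: "tail_test T" and e: "0 < e" "e < 1"
    and no_manip: "\<And>g0 g1. measure (induced g0 g1 k) {w. T w g0 g1 = x} \<le> 1 - e"
    and B: "B \<in> sets Omega_inf" "\<And>w. w \<in> B \<Longrightarrow> T w f0 f1 = x \<and> lr_pos f0 f1 0 w \<and> lr_pos f0 f1 1 w"
  shows "measure (induced f0 f1 k) B = 0"
  using manipulation[OF ct tail B(1) _ B(2) e] no_manip measure_nonneg[of _ B]
  by (meson linorder_not_le order_less_le)

lemma test_value_lr_pos_in_Omega_inf:
  "comparison_test T \<Longrightarrow> {w. T w f0 f1 = x \<and> lr_pos f0 f1 0 w \<and> lr_pos f0 f1 1 w} \<in> sets Omega_inf"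
  using measurable_test_set lr_pos_in_Omega_inf
  by (auto simp: Collect_conj_eq intro!: sets.Int)

lemma AE_not_manipulable_value:
  assumes ct: "comparison_test T" and tail: "tail_test T" and e: "0 < e" "e < 1"
    and no_manip: "\<And>g0 g1. measure (induced g0 g1 k) {w. T w g0 g1 = x} \<le> 1 - e"
  shows "AE w in induced f0 f1 k. lr_pos f0 f1 0 w \<and> lr_pos f0 f1 1 w \<longrightarrow> T w f0 f1 \<noteq> x"
proof (rule AE_I')
  show "{w. T w f0 f1 = x \<and> lr_pos f0 f1 0 w \<and> lr_pos f0 f1 1 w} \<in> null_sets (induced f0 f1 k)"
    using null_if_not_manipulable[OF ct tail e no_manip test_value_lr_pos_in_Omega_inf[OF ct]]
      test_value_lr_pos_in_Omega_inf[OF ct] by (simp add: null_sets_induced_iff)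
qed auto

lemma AE_lr_tendsto_zero_if_not_manipulable:
  assumes ct: "comparison_test T" and tail: "tail_test T" and e: "0 < e" "e < 1" and j: "j \<in> {0, 1}"
    and no_manip: "\<And>g0 g1. measure (induced g0 g1 (1 - j)) {w. T w g0 g1 = x} \<le> 1 - e"
  shows "AE w in induced f0 f1 j.
    lr_pos f0 f1 0 w \<and> lr_pos f0 f1 1 w \<and> T w f0 f1 = x \<longrightarrow> (\<lambda>t. lr f0 f1 j w t) \<longlonglongrightarrow> 0"
proof -
  define S where "S m = {w. T w f0 f1 = x \<and> lr_pos f0 f1 0 w \<and> lr_pos f0 f1 1 w} \<inter>
    {w. \<exists>\<^sub>F t in sequentially. lr f0 f1 j w t \<ge> 1 / real (Suc m)}" for m
  have S_sets: "S m \<in> sets Omega_inf" for m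
    unfolding S_def by (intro sets.Int test_value_lr_pos_in_Omega_inf[OF ct] frequently_lr_ge_in_Omega_inf)
  have "measure (induced f0 f1 j) (S m) = 0" for m
  proof (rule measure_zero_if_frequently_lr_ge[OF S_sets])
    show "measure (induced f0 f1 (1 - j)) (S m) = 0"
      using null_if_not_manipulable[OF ct tail e no_manip S_sets] by (auto simp: S_def)
  qed (use j in \<open>auto simp: S_def\<close>)
  then have "AE w in induced f0 f1 j. w \<notin> S m" for m
    using S_sets by (intro AE_not_in) (simp add: null_sets_induced_iff)
  then have "AE w in induced f0 f1 j. \<forall>m. w \<notin> S m"
    by (simp add: AE_all_countable)
  then show ?thesis
  proof eventually_elim
    case (elim w)
    then show ?case
      using frequently_lr_ge_if_not_tendsto_zero[of f0 f1 j w] unfolding S_def by blast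
  qed
qed

lemma test_equiv_deriv_test_if_not_manipulable:
  assumes ct: "comparison_test T" and reas: "reasonable T" and tail: "tail_test T"
    and e: "0 < e" "e < 1"
    and no_manip: "\<And>g0 g1 k. k \<in> {0, 1} \<Longrightarrow> measure (induced g0 g1 k) {w. T w g0 g1 = real (1 - k)} \<le> 1 - e"
  shows "test_equiv T deriv_test"
  unfolding test_equiv_def
proof (intro allI impI)
  fix f0 f1 i assume i: "i \<in> {0::nat, 1}"
  have "1 - i \<in> {0, 1}" "1 - (1 - i) = i" using i by auto
  then have no_manip_i: "measure (induced g0 g1 (1 - i)) {w. T w g0 g1 = real i} \<le> 1 - e" for g0 g1
    using no_manip[of "1 - i"] by simp
  have T_values: "T w f0 f1 \<in> {0, 1/2, 1}" for w using ct by (simp add: comparison_test_def)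
  show "AE w in induced f0 f1 i. T w f0 f1 = deriv_test w f0 f1"
    using AE_lr_pos AE_not_D_exists_zero_other[OF i] AE_D_exists_zero_imp_test[OF ct reas i]
      AE_not_manipulable_value[OF ct tail e no_manip[OF i]]
      AE_lr_tendsto_zero_if_not_manipulable[OF ct tail e i no_manip_i]
  proof eventually_elim
    case (elim w)
    then show ?case
      by (intro eq_deriv_test_if[of i T w f0 f1, OF i T_values]) auto
  qed
qed

theorem theorem3:
  fixes T :: "(nat \<Rightarrow> bool) \<Rightarrow> fstrat \<Rightarrow> fstrat \<Rightarrow> real"
  assumes "comparison_test T"
    and "anonymous T"
    and "non_counterfactual T"
    and "reasonable T"
    and "tail_test T"
    and "\<not> test_equiv T deriv_test"
  shows "\<forall>\<epsilon>::real. 0 < \<epsilon> \<and> \<epsilon> < 1 \<longrightarrow>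
           (\<exists>g0 g1. measure (induced g0 g1 0) {w. T w g0 g1 = 1} > 1 - \<epsilon>
                  \<or> measure (induced g0 g1 1) {w. T w g0 g1 = 0} > 1 - \<epsilon>)"
proof (intro allI impI, rule ccontr)
  fix e :: real assume e: "0 < e \<and> e < 1"
    and "\<not> (\<exists>g0 g1. measure (induced g0 g1 0) {w. T w g0 g1 = 1} > 1 - e
                  \<or> measure (induced g0 g1 1) {w. T w g0 g1 = 0} > 1 - e)"
  then have "measure (induced g0 g1 k) {w. T w g0 g1 = real (1 - k)} \<le> 1 - e"
    if "k \<in> {0, 1}" for g0 g1 k
    using that by (auto simp: not_less)
  then have "test_equiv T deriv_test"
    using test_equiv_deriv_test_if_not_manipulable assms(1,4,5) e by blast
  then show False using assms(6) by contradiction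
qed

end
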